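(* For every $t$, $$\mathrm{var}(r_t)=\mu^2\lambda^2 e\int_{-1}^0\int_{-1}^0\left\{e^{\gamma_Z(s-t')}-1\right\}dt'\,ds+\lambda e^{1/2}(\mu^2+\sigma_e^2).$$
   Context: Standing model. Fix $d\in[0,\tfrac12)$ and put $H=\tfrac12+d$. Let $B_H$ be a fractional Brownian motion with Hurst index $H$ (a standard Brownian motion if $H=\tfrac12$), fix $c>0$, and let $Z_H(t)=B_H(ct)-B_H(ct-1)$, $t\in\mathbb R$; this is a stationary Gaussian process with mean $0$, variance $1$ and autocovariance $\gamma_Z(r)=\tfrac12\left[|cr+1|^{2H}-2|cr|^{2H}+|cr-1|^{2H}\right]$. Fix $\lambda>0$ and let $N$ be a Cox process on $\mathbb R$ directed by the random measure $\Lambda(A)=\int_A\lambda e^{Z_H(t)}\,dt$ (conditionally on $Z_H$, $N$ is a Poisson process with mean measure $\Lambda$). Write $N(t)=N((0,t])$ and $\Delta N(t)=N((t-1,t])$. Let $(e_k)$ be i.i.d. random variables with mean $0$, variance $\sigma_e^2$ and finite moments of all orders, independent of $N$, attached to the successive points of $N$, and fix $\mu>0$. The log price is $\log P(t)=\sum_{k=1}^{N(t)}(\mu+e_k)$, and the daily return for $t\in\mathbb Z$ is $r_t=\mu\,\Delta N(t)+\sum e_k$, the sum over the shocks attached to the points of $N$ in $(t-1,t]$; $(r_t)$ is strictly stationary. *)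

theory Defs
  imports "HOL-Probability.Probability"
begin

definition gaussian_rv :: "'a measure \<Rightarrow> ('a \<Rightarrow> real) \<Rightarrow> real \<Rightarrow> real \<Rightarrow> bool" where
  "gaussian_rv M X m v \<longleftrightarrow> X \<in> borel_measurable M \<and> v \<ge> 0 \<and>
     (if v > 0 then distributed M lborel X (normal_density m (sqrt v))
      else (AE \<omega> in M. X \<omega> = m))"

definition fbm_cov :: "real \<Rightarrow> real \<Rightarrow> real \<Rightarrow> real" where
  "fbm_cov H s t = (\<bar>s\<bar> powr (2*H) + \<bar>t\<bar> powr (2*H) - \<bar>t - s\<bar> powr (2*H)) / 2"

definition is_fbm :: "'a measure \<Rightarrow> real \<Rightarrow> ('a \<Rightarrow> real \<Rightarrow> real) \<Rightarrow> bool" where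
  "is_fbm M H B \<longleftrightarrow>
     (\<forall>t. (\<lambda>\<omega>. B \<omega> t) \<in> borel_measurable M) \<and>
     (\<forall>\<omega>\<in>space M. continuous_on UNIV (B \<omega>)) \<and>
     (\<forall>(I :: real set) (cf :: real \<Rightarrow> real). finite I \<longrightarrow>
        gaussian_rv M (\<lambda>\<omega>. \<Sum>t\<in>I. cf t * B \<omega> t) 0
          (\<Sum>s\<in>I. \<Sum>t\<in>I. cf s * cf t * fbm_cov H s t))"

text \<open>Autocovariance of Z_H(t) = B_H(ct) - B_H(ct-1).\<close>
definition gammaZ :: "real \<Rightarrow> real \<Rightarrow> real \<Rightarrow> real" where
  "gammaZ H c r = (\<bar>c*r + 1\<bar> powr (2*H) - 2 * \<bar>c*r\<bar> powr (2*H) + \<bar>c*r - 1\<bar> powr (2*H)) / 2"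

definition count_pts :: "('a \<Rightarrow> int \<Rightarrow> real) \<Rightarrow> 'a \<Rightarrow> real set \<Rightarrow> nat" where
  "count_pts T \<omega> A = card {k. T \<omega> k \<in> A}"

text \<open>Cox property: conditionally on the sigma-algebra F (generated by the driving
  process), the counts of the point process in finitely many disjoint intervals
  (a_i, b_i] are independent Poisson with means Lam \<omega> (a_i) (b_i).\<close>
definition cox_given :: "'a measure \<Rightarrow> 'a measure \<Rightarrow> ('a \<Rightarrow> real \<Rightarrow> real \<Rightarrow> real)
    \<Rightarrow> ('a \<Rightarrow> int \<Rightarrow> real) \<Rightarrow> bool" where
  "cox_given M F Lam T \<longleftrightarrow>
     (\<forall>(m::nat) (a::nat \<Rightarrow> real) (b::nat \<Rightarrow> real) (n::nat \<Rightarrow> nat).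
        (\<forall>i<m. a i \<le> b i) \<longrightarrow> (\<forall>i<m. \<forall>j<m. i \<noteq> j \<longrightarrow> b i \<le> a j \<or> b j \<le> a i) \<longrightarrow>
        (AE \<omega> in M. real_cond_exp M F
            (indicator {\<omega>'\<in>space M. \<forall>i<m. count_pts T \<omega>' {a i<..b i} = n i}) \<omega>
          = (\<Prod>i<m. exp (- Lam \<omega> (a i) (b i)) * Lam \<omega> (a i) (b i) ^ n i / fact (n i))))"

end

theory Submission
  imports Defs
begin

text \<open>Conditionally on the driving process, the number N of points in a window (a, b] is
  Poisson with mean L = LBINT s=a..b. lam * exp (Z s), so E N = E L and E N^2 = E L + E L^2.
  By Fubini and the lognormal moments E exp (Z s) = exp (1/2) and
  E exp (Z s + Z u) = exp (1 + gammaZ (s - u)), these equal lam exp (1/2) (b - a) and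
  lam^2 e times the double integral of exp (gammaZ (s - u)). The shocks are independent of the
  index set of the points in the window, so E (r - c)^2 = E ((mu N - c)^2 + sig^2 N) for every c;
  the cases c = 0 and c = 1 give both moments of r and hence its variance.\<close>

section \<open>Gaussian exponential moments\<close>

lemma normal_density_times_exp:
  assumes "\<sigma> > 0"
  shows "normal_density 0 \<sigma> x * exp x = exp (\<sigma>\<^sup>2/2) * normal_density (\<sigma>\<^sup>2) \<sigma> x"
proof -
  have "-(x - 0)\<^sup>2/(2*\<sigma>\<^sup>2) + x = \<sigma>\<^sup>2/2 + (-(x - \<sigma>\<^sup>2)\<^sup>2/(2*\<sigma>\<^sup>2))"
    using assms by (simp add: field_simps power2_eq_square)
  then have "exp (-(x - 0)\<^sup>2/(2*\<sigma>\<^sup>2)) * exp x = exp (\<sigma>\<^sup>2/2) * exp (-(x - \<sigma>\<^sup>2)\<^sup>2/(2*\<sigma>\<^sup>2))"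
    by (metis exp_add)
  then show ?thesis unfolding normal_density_def by (simp add: algebra_simps)
qed

lemma gaussian_rv_nn_integral_exp:
  assumes "prob_space M" "gaussian_rv M X 0 v"
  shows "(\<integral>\<^sup>+\<omega>. ennreal (exp (X \<omega>)) \<partial>M) = ennreal (exp (v/2))"
proof -
  interpret prob_space M by fact
  have v: "v \<ge> 0" using assms(2) unfolding gaussian_rv_def by auto
  show ?thesis
  proof (cases "v > 0")
    case True
    define \<sigma> where "\<sigma> = sqrt v"
    have \<sigma>: "\<sigma> > 0" "\<sigma>\<^sup>2 = v" using True by (auto simp: \<sigma>_def)
    have D: "distributed M lborel X (normal_density 0 \<sigma>)"
      using assms(2) True unfolding gaussian_rv_def \<sigma>_def by auto
    have "(\<integral>\<^sup>+\<omega>. ennreal (exp (X \<omega>)) \<partial>M) = (\<integral>\<^sup>+x. ennreal (normal_density 0 \<sigma> x * exp x) \<partial>lborel)"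
      using distributed_nn_integral[OF D, of "\<lambda>x. ennreal (exp x)"] by (simp add: ennreal_mult)
    also have "\<dots> = (\<integral>\<^sup>+x. ennreal (exp (\<sigma>\<^sup>2/2) * normal_density (\<sigma>\<^sup>2) \<sigma> x) \<partial>lborel)"
      by (simp add: normal_density_times_exp[OF \<sigma>(1)])
    also have "\<dots> = ennreal (exp (v/2))"
      using integrable_normal_density[OF \<sigma>(1)] integral_normal_density[OF \<sigma>(1)] \<sigma>(2)
      by (subst nn_integral_eq_integral) auto
    finally show ?thesis .
  next
    case False
    then have "AE \<omega> in M. X \<omega> = 0" using assms(2) v unfolding gaussian_rv_def by auto
    then have "AE \<omega> in M. ennreal (exp (X \<omega>)) = 1" by eventually_elim simp
    then have "(\<integral>\<^sup>+\<omega>. ennreal (exp (X \<omega>)) \<partial>M) = (\<integral>\<^sup>+\<omega>. 1 \<partial>M)"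
      by (rule nn_integral_cong_AE)
    then show ?thesis using False v by (simp add: emeasure_space_1)
  qed
qed

section \<open>Increments of fractional Brownian motion\<close>

lemma is_fbm_lincomb:
  fixes I :: "'i set" and a x :: "'i \<Rightarrow> real"
  assumes "is_fbm M H B" "finite I"
  shows "gaussian_rv M (\<lambda>\<omega>. \<Sum>i\<in>I. a i * B \<omega> (x i)) 0
           (\<Sum>i\<in>I. \<Sum>j\<in>I. a i * a j * fbm_cov H (x i) (x j))"
proof -
  txt \<open>The definition of is_fbm ranges over sets of distinct times, so the
    coefficients of repeated times are merged first.\<close>
  define P where "P = x ` I"
  define cf where "cf p = (\<Sum>i\<in>{i\<in>I. x i = p}. a i)" for p
  have fP: "finite P" using assms(2) by (simp add: P_def)
  have G: "gaussian_rv M (\<lambda>\<omega>. \<Sum>p\<in>P. cf p * B \<omega> p) 0 (\<Sum>p\<in>P. \<Sum>q\<in>P. cf p * cf q * fbm_cov H p q)"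
    using assms(1) fP unfolding is_fbm_def by blast
  have lin: "(\<Sum>p\<in>P. cf p * B \<omega> p) = (\<Sum>i\<in>I. a i * B \<omega> (x i))" for \<omega>
  proof -
    have "(\<Sum>p\<in>P. cf p * B \<omega> p) = (\<Sum>p\<in>P. \<Sum>i\<in>{i\<in>I. x i = p}. a i * B \<omega> (x i))"
      unfolding cf_def sum_distrib_right by (intro sum.cong refl) auto
    also have "\<dots> = (\<Sum>i\<in>I. a i * B \<omega> (x i))"
      by (rule sum.group) (auto simp: P_def assms(2))
    finally show ?thesis .
  qed
  have inner: "cf p * cf q * fbm_cov H p q
      = (\<Sum>i\<in>{i\<in>I. x i = p}. \<Sum>j\<in>{j\<in>I. x j = q}. a i * a j * fbm_cov H (x i) (x j))" for p q
  proof -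
    have "cf p * cf q * fbm_cov H p q
        = (\<Sum>i\<in>{i\<in>I. x i = p}. \<Sum>j\<in>{j\<in>I. x j = q}. a i * a j * fbm_cov H p q)"
      unfolding cf_def sum_distrib_right sum_distrib_left by (subst sum.swap) (simp add: algebra_simps)
    also have "\<dots> = (\<Sum>i\<in>{i\<in>I. x i = p}. \<Sum>j\<in>{j\<in>I. x j = q}. a i * a j * fbm_cov H (x i) (x j))"
      by (intro sum.cong refl) auto
    finally show ?thesis .
  qed
  have "(\<Sum>p\<in>P. \<Sum>q\<in>P. cf p * cf q * fbm_cov H p q)
      = (\<Sum>p\<in>P. \<Sum>i\<in>{i\<in>I. x i = p}. \<Sum>q\<in>P. \<Sum>j\<in>{j\<in>I. x j = q}. a i * a j * fbm_cov H (x i) (x j))"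
    unfolding inner by (intro sum.cong refl sum.swap)
  also have "\<dots> = (\<Sum>i\<in>I. \<Sum>q\<in>P. \<Sum>j\<in>{j\<in>I. x j = q}. a i * a j * fbm_cov H (x i) (x j))"
    by (rule sum.group) (auto simp: P_def assms(2))
  also have "\<dots> = (\<Sum>i\<in>I. \<Sum>j\<in>I. a i * a j * fbm_cov H (x i) (x j))"
    by (intro sum.cong refl sum.group) (auto simp: P_def assms(2))
  finally show ?thesis using G unfolding lin by simp
qed

lemma fbm_cov_two_increments:
  fixes a x :: "nat \<Rightarrow> real"
  assumes x: "x 0 = P" "x 1 = P - 1" "x 2 = Q" "x 3 = Q - 1"
    and a: "a 0 = 1" "a 1 = -1" "a 2 = b" "a 3 = -b"
  shows "(\<Sum>i\<in>{0,1,2,3}. \<Sum>j\<in>{0,1,2,3}. a i * a j * fbm_cov H (x i) (x j))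
      = 1 + b\<^sup>2 + b * (\<bar>P - Q + 1\<bar> powr (2*H) - 2 * \<bar>P - Q\<bar> powr (2*H) + \<bar>P - Q - 1\<bar> powr (2*H))"
proof -
  have f1: "\<bar>P - (P - 1)\<bar> = 1" "\<bar>P - 1 - P\<bar> = 1" "\<bar>Q - (Q - 1)\<bar> = 1" "\<bar>Q - 1 - Q\<bar> = 1" by auto
  have f2: "\<bar>Q - P\<bar> = \<bar>P - Q\<bar>" "\<bar>Q - 1 - (P - 1)\<bar> = \<bar>P - Q\<bar>" "\<bar>P - 1 - (Q - 1)\<bar> = \<bar>P - Q\<bar>"
    "\<bar>Q - 1 - P\<bar> = \<bar>P - Q + 1\<bar>" "\<bar>P - (Q - 1)\<bar> = \<bar>P - Q + 1\<bar>"
    "\<bar>Q - (P - 1)\<bar> = \<bar>P - Q - 1\<bar>" "\<bar>P - 1 - Q\<bar> = \<bar>P - Q - 1\<bar>" by auto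
  have sum4: "(\<Sum>i\<in>{0,1,2,3::nat}. f i) = f 0 + f 1 + f 2 + f 3" for f :: "nat \<Rightarrow> real"
    by (simp add: algebra_simps)
  show ?thesis
    unfolding sum4 x a fbm_cov_def
    by (simp only: f1 f2 diff_self abs_zero) (simp add: field_simps power2_eq_square)
qed

context
  fixes M :: "'a measure" and H c :: real and B Z :: "'a \<Rightarrow> real \<Rightarrow> real"
  assumes fbm: "is_fbm M H B"
    and Zdef: "\<And>\<omega> t. Z \<omega> t = B \<omega> (c*t) - B \<omega> (c*t - 1)"
begin

lemma fbm_increments_gaussian:
  "gaussian_rv M (\<lambda>\<omega>. Z \<omega> s + b * Z \<omega> u) 0 (1 + b\<^sup>2 + 2 * b * gammaZ H c (s - u))"
proof -
  define x where "x = (\<lambda>i::nat. if i = 0 then c * s else if i = 1 then c * s - 1 else if i = 2 then c * u else c * u - 1)"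
  define a where "a = (\<lambda>i::nat. if i = 0 then 1 else if i = 1 then -1 else if i = 2 then b else - b)"
  have "gaussian_rv M (\<lambda>\<omega>. \<Sum>i\<in>{0,1,2,3}. a i * B \<omega> (x i)) 0
          (\<Sum>i\<in>{0,1,2,3}. \<Sum>j\<in>{0,1,2,3}. a i * a j * fbm_cov H (x i) (x j))"
    by (rule is_fbm_lincomb[OF fbm]) simp
  moreover have "(\<lambda>\<omega>. \<Sum>i\<in>{0,1,2,3}. a i * B \<omega> (x i)) = (\<lambda>\<omega>. Z \<omega> s + b * Z \<omega> u)"
    by (simp add: a_def x_def Zdef algebra_simps)
  moreover have "(\<Sum>i\<in>{0,1,2,3}. \<Sum>j\<in>{0,1,2,3}. a i * a j * fbm_cov H (x i) (x j))
      = 1 + b\<^sup>2 + 2 * b * gammaZ H c (s - u)"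
    by (subst fbm_cov_two_increments[where P = "c * s" and Q = "c * u" and b = b])
       (simp_all add: x_def a_def gammaZ_def right_diff_distrib)
  ultimately show ?thesis by simp
qed

lemma fbm_increment_measurable: "(\<lambda>\<omega>. Z \<omega> s) \<in> borel_measurable M"
proof -
  have "(\<lambda>\<omega>. B \<omega> t) \<in> borel_measurable M" for t
    using fbm unfolding is_fbm_def by blast
  then show ?thesis unfolding Zdef by (intro borel_measurable_diff)
qed

lemma fbm_increment_continuous:
  assumes "\<omega> \<in> space M"
  shows "continuous_on UNIV (Z \<omega>)"
proof -
  have Bc: "continuous_on UNIV (B \<omega>)"
    using fbm assms unfolding is_fbm_def by blast
  have "continuous_on UNIV (\<lambda>t. B \<omega> (c*t) - B \<omega> (c*t - 1))"
    by (intro continuous_on_diff continuous_on_compose2[OF Bc] continuous_intros) auto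
  then show ?thesis by (simp add: Zdef[abs_def])
qed

lemma lognormal_intensity_moments:
  assumes "prob_space M" "lam \<ge> 0"
  shows "(\<integral>\<^sup>+\<omega>. ennreal (lam * exp (Z \<omega> s)) \<partial>M) = ennreal (lam * exp (1/2))"
    and "(\<integral>\<^sup>+\<omega>. ennreal (lam * exp (Z \<omega> s) * (lam * exp (Z \<omega> u))) \<partial>M)
           = ennreal (lam\<^sup>2 * exp 1 * exp (gammaZ H c (s - u)))"
proof -
  have scaled: "(\<integral>\<^sup>+\<omega>. ennreal (C * exp (Z \<omega> s + b * Z \<omega> u)) \<partial>M)
      = ennreal (C * exp ((1 + b\<^sup>2 + 2 * b * gammaZ H c (s - u)) / 2))" if "C \<ge> 0" for C b
  proof -
    have "(\<integral>\<^sup>+\<omega>. ennreal (C * exp (Z \<omega> s + b * Z \<omega> u)) \<partial>M)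
        = (\<integral>\<^sup>+\<omega>. ennreal C * ennreal (exp (Z \<omega> s + b * Z \<omega> u)) \<partial>M)"
      using that by (intro nn_integral_cong) (simp add: ennreal_mult)
    also have "\<dots> = ennreal C * (\<integral>\<^sup>+\<omega>. ennreal (exp (Z \<omega> s + b * Z \<omega> u)) \<partial>M)"
      by (rule nn_integral_cmult) (use fbm_increment_measurable in measurable)
    finally show ?thesis
      using that by (simp only: gaussian_rv_nn_integral_exp[OF assms(1) fbm_increments_gaussian]
          ennreal_mult exp_ge_zero)
  qed
  show "(\<integral>\<^sup>+\<omega>. ennreal (lam * exp (Z \<omega> s)) \<partial>M) = ennreal (lam * exp (1/2))"
    using scaled[OF assms(2), of 0] by simp
  have exp_half: "exp ((1 + 1\<^sup>2 + 2 * 1 * gammaZ H c (s - u)) / 2) = exp 1 * exp (gammaZ H c (s - u))"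
    by (simp add: exp_add[symmetric])
  have "(\<integral>\<^sup>+\<omega>. ennreal (lam * exp (Z \<omega> s) * (lam * exp (Z \<omega> u))) \<partial>M)
      = (\<integral>\<^sup>+\<omega>. ennreal (lam\<^sup>2 * exp (Z \<omega> s + 1 * Z \<omega> u)) \<partial>M)"
    by (simp add: exp_add power2_eq_square mult_ac)
  also have "\<dots> = ennreal (lam\<^sup>2 * exp ((1 + 1\<^sup>2 + 2 * 1 * gammaZ H c (s - u)) / 2))"
    by (rule scaled) simp
  also have "\<dots> = ennreal (lam\<^sup>2 * exp 1 * exp (gammaZ H c (s - u)))"
    unfolding exp_half by (simp only: mult.assoc)
  finally show "(\<integral>\<^sup>+\<omega>. ennreal (lam * exp (Z \<omega> s) * (lam * exp (Z \<omega> u))) \<partial>M)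
      = ennreal (lam\<^sup>2 * exp 1 * exp (gammaZ H c (s - u)))" .
qed

end

lemma continuous_on_gammaZ: "H > 0 \<Longrightarrow> continuous_on UNIV (gammaZ H c)"
  unfolding gammaZ_def[abs_def] by (intro continuous_intros continuous_on_powr') auto

lemma interval_integral_eq_integral_indicator:
  fixes f :: "real \<Rightarrow> real" and a b :: real
  assumes "a \<le> b"
  shows "(LBINT s=a..b. f s) = (\<integral>s. indicator {a<..<b} s * f s \<partial>lborel)"
  using assms by (simp add: interval_lebesgue_integral_le_eq set_lebesgue_integral_def)

lemma ereal_minus_one: "ereal (-1) = -1"
  by (simp add: one_ereal_def)

lemma interval_integral_minus_one_zero:
  fixes f :: "real \<Rightarrow> real"
  shows "(LBINT s=-1..0. f s) = (\<integral>s. indicator {-1<..<0} s * f s \<partial>lborel)"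
  using interval_integral_eq_integral_indicator[of "-1" 0 f] by (simp add: ereal_minus_one zero_ereal_def)

lemma interval_integral_nonneg:
  fixes f :: "real \<Rightarrow> real" and a b :: real
  assumes "a \<le> b" "\<And>x. 0 \<le> f x"
  shows "0 \<le> (LBINT s=a..b. f s)"
  unfolding interval_integral_eq_integral_indicator[OF assms(1)]
  using assms(2) by (intro integral_nonneg_AE) (simp add: indicator_def)

lemma double_interval_integral_nonneg:
  fixes k :: "real \<Rightarrow> real" and a b :: real
  assumes "a \<le> b" "\<And>x. 0 \<le> k x"
  shows "0 \<le> (LBINT s=a..b. (LBINT u=a..b. k (s - u)))"
  using assms by (intro interval_integral_nonneg)

lemma ennreal_interval_integral_continuous:
  fixes g :: "real \<Rightarrow> real" and a b :: real
  assumes "a \<le> b" "continuous_on UNIV g" "\<And>x. 0 \<le> g x"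
  shows "ennreal (LBINT s=a..b. g s) = (\<integral>\<^sup>+s. ennreal (indicator {a<..<b} s * g s) \<partial>lborel)"
proof -
  have "interval_lebesgue_integrable lborel (ereal a) (ereal b) g"
    using assms(2) by (intro interval_integrable_isCont) (simp add: continuous_on_eq_continuous_at)
  then have "integrable lborel (\<lambda>s. indicator {a<..<b} s * g s)"
    using assms(1) by (simp add: interval_lebesgue_integrable_def set_integrable_def)
  then show ?thesis
    unfolding interval_integral_eq_integral_indicator[OF assms(1)] using assms(3)
    by (intro nn_integral_eq_integral[symmetric]) (auto simp: indicator_def)
qed

lemma ennreal_interval_integral_square:
  fixes g :: "real \<Rightarrow> real" and a b :: real
  assumes "a \<le> b" "continuous_on UNIV g" "\<And>x. 0 \<le> g x"
  shows "ennreal ((LBINT s=a..b. g s)\<^sup>2) =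
    (\<integral>\<^sup>+s. (\<integral>\<^sup>+u. ennreal (indicator {a<..<b} s * indicator {a<..<b} u * g s * g u) \<partial>lborel) \<partial>lborel)"
proof -
  let ?G = "\<lambda>s. ennreal (indicator {a<..<b} s * g s)"
  have [measurable]: "g \<in> borel_measurable borel"
    using assms(2) by (rule borel_measurable_continuous_onI)
  have Gm: "?G \<in> borel_measurable lborel" by measurable
  have "0 \<le> (LBINT s=a..b. g s)" using assms(1,3) by (rule interval_integral_nonneg)
  then have "ennreal ((LBINT s=a..b. g s)\<^sup>2) = (\<integral>\<^sup>+s. ?G s \<partial>lborel) * (\<integral>\<^sup>+u. ?G u \<partial>lborel)"
    by (simp add: power2_eq_square ennreal_mult ennreal_interval_integral_continuous[OF assms])
  also have "\<dots> = (\<integral>\<^sup>+s. ?G s * (\<integral>\<^sup>+u. ?G u \<partial>lborel) \<partial>lborel)"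
    by (rule nn_integral_multc[symmetric, OF Gm])
  also have "\<dots> = (\<integral>\<^sup>+s. (\<integral>\<^sup>+u. ?G s * ?G u \<partial>lborel) \<partial>lborel)"
    by (intro nn_integral_cong nn_integral_cmult[symmetric] Gm)
  also have "\<dots> = (\<integral>\<^sup>+s. (\<integral>\<^sup>+u. ennreal (indicator {a<..<b} s * indicator {a<..<b} u * g s * g u) \<partial>lborel) \<partial>lborel)"
    by (intro nn_integral_cong) (simp add: ennreal_mult[symmetric] assms(3) mult_ac)
  finally show ?thesis .
qed

lemma nn_integral_double_interval_finite:
  fixes k :: "real \<Rightarrow> real" and a b :: real
  assumes ab: "a \<le> b" and kc: "continuous_on UNIV k"
  shows "(\<integral>\<^sup>+s. (\<integral>\<^sup>+u. ennreal (indicator {a<..<b} s * indicator {a<..<b} u * k (s - u)) \<partial>lborel) \<partial>lborel) < \<infinity>"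
proof -
  obtain C where C: "\<And>r. r \<in> {a - b..b - a} \<Longrightarrow> k r \<le> C"
  proof -
    have "\<exists>x\<in>{a - b..b - a}. \<forall>y\<in>{a - b..b - a}. k y \<le> k x"
      by (rule continuous_attains_sup) (use ab continuous_on_subset[OF kc] in auto)
    then show ?thesis using that by blast
  qed
  have "(\<integral>\<^sup>+s. (\<integral>\<^sup>+u. ennreal (indicator {a<..<b} s * indicator {a<..<b} u * k (s - u)) \<partial>lborel) \<partial>lborel)
      \<le> (\<integral>\<^sup>+s. (\<integral>\<^sup>+u. ennreal \<bar>C\<bar> * indicator {a<..<b} s * indicator {a<..<b} u \<partial>lborel) \<partial>lborel)"
  proof (intro nn_integral_mono)
    fix s u :: real
    show "ennreal (indicator {a<..<b} s * indicator {a<..<b} u * k (s - u))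
        \<le> ennreal \<bar>C\<bar> * indicator {a<..<b} s * indicator {a<..<b} u"
      using C[of "s - u"] by (auto simp: indicator_def intro!: ennreal_leI)
  qed
  also have "\<dots> = ennreal \<bar>C\<bar> * ennreal (b - a) * ennreal (b - a)"
    using ab by (simp add: nn_integral_cmult nn_integral_multc)
  also have "\<dots> < \<infinity>" by (simp add: ennreal_mult_less_top)
  finally show ?thesis .
qed

lemma double_interval_integral:
  fixes k :: "real \<Rightarrow> real" and a b :: real
  assumes ab: "a \<le> b" and kc: "continuous_on UNIV k" and kpos: "\<And>x. 0 \<le> k x"
  shows "interval_lebesgue_integrable lborel a b (\<lambda>s. LBINT u=a..b. k (s - u))"
    and "ennreal (LBINT s=a..b. (LBINT u=a..b. k (s - u))) =
     (\<integral>\<^sup>+s. (\<integral>\<^sup>+u. ennreal (indicator {a<..<b} s * indicator {a<..<b} u * k (s - u)) \<partial>lborel) \<partial>lborel)"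
proof -
  define G where "G s = (LBINT u=a..b. k (s - u))" for s
  have km[measurable]: "k \<in> borel_measurable borel"
    using kc by (rule borel_measurable_continuous_onI)
  have kcs: "continuous_on UNIV (\<lambda>u. k (s - u))" for s
    by (rule continuous_on_compose2[OF kc]) (auto intro!: continuous_intros)
  have Gpos: "0 \<le> G s" for s
    unfolding G_def using ab kpos by (rule interval_integral_nonneg)
  have "(\<lambda>s. \<integral>u. indicator {a<..<b} u * k (s - u) \<partial>lborel) \<in> borel_measurable lborel"
    by measurable
  then have Gm: "G \<in> borel_measurable lborel"
    by (simp add: G_def[abs_def] interval_integral_eq_integral_indicator[OF ab])
  have nn_G: "(\<integral>\<^sup>+s. ennreal (indicator {a<..<b} s * G s) \<partial>lborel) =
     (\<integral>\<^sup>+s. (\<integral>\<^sup>+u. ennreal (indicator {a<..<b} s * indicator {a<..<b} u * k (s - u)) \<partial>lborel) \<partial>lborel)"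
  proof (intro nn_integral_cong)
    fix s
    have "ennreal (indicator {a<..<b} s * G s) = ennreal (indicator {a<..<b} s) * ennreal (G s)"
      by (simp add: ennreal_mult Gpos)
    also have "\<dots> = ennreal (indicator {a<..<b} s) * (\<integral>\<^sup>+u. ennreal (indicator {a<..<b} u * k (s - u)) \<partial>lborel)"
      unfolding G_def ennreal_interval_integral_continuous[OF ab kcs kpos] ..
    also have "\<dots> = (\<integral>\<^sup>+u. ennreal (indicator {a<..<b} s) * ennreal (indicator {a<..<b} u * k (s - u)) \<partial>lborel)"
      by (rule nn_integral_cmult[symmetric]) measurable
    also have "\<dots> = (\<integral>\<^sup>+u. ennreal (indicator {a<..<b} s * indicator {a<..<b} u * k (s - u)) \<partial>lborel)"
      by (intro nn_integral_cong) (simp add: ennreal_mult[symmetric] kpos mult.assoc)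
    finally show "ennreal (indicator {a<..<b} s * G s)
        = (\<integral>\<^sup>+u. ennreal (indicator {a<..<b} s * indicator {a<..<b} u * k (s - u)) \<partial>lborel)" .
  qed
  have IG: "integrable lborel (\<lambda>s. indicator {a<..<b} s * G s)"
    using Gm Gpos nn_integral_double_interval_finite[OF ab kc]
    by (intro integrableI_nonneg) (auto simp: nn_G)
  show "interval_lebesgue_integrable lborel a b (\<lambda>s. LBINT u=a..b. k (s - u))"
    using IG ab by (simp add: interval_lebesgue_integrable_def set_integrable_def G_def)
  show "ennreal (LBINT s=a..b. (LBINT u=a..b. k (s - u))) =
     (\<integral>\<^sup>+s. (\<integral>\<^sup>+u. ennreal (indicator {a<..<b} s * indicator {a<..<b} u * k (s - u)) \<partial>lborel) \<partial>lborel)"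
    using nn_integral_eq_integral[OF IG] Gpos
    by (simp add: nn_G G_def[symmetric] interval_integral_eq_integral_indicator[OF ab])
qed

lemma double_interval_integral_shift:
  fixes k :: "real \<Rightarrow> real" and a :: real
  shows "(LBINT s=a..a+1. (LBINT u=a..a+1. k (s - u))) = (LBINT s=-1..0. (LBINT u=-1..0. k (s - u)))"
proof -
  have shift: "(\<integral>s. indicator {a<..<a+1} s * f s \<partial>lborel) = (\<integral>s. indicator {-1<..<0} s * f (a + 1 + s) \<partial>lborel)"
    for f :: "real \<Rightarrow> real"
  proof -
    have "(\<integral>s. indicator {a<..<a+1} s * f s \<partial>lborel)
        = (\<integral>s. indicator {a<..<a+1} (a + 1 + s) * f (a + 1 + s) \<partial>lborel)"
      using lborel_integral_real_affine[of 1 "\<lambda>s. indicator {a<..<a+1} s * f s" "a + 1"] by simp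
    also have "\<dots> = (\<integral>s. indicator {-1<..<0} s * f (a + 1 + s) \<partial>lborel)"
      by (intro Bochner_Integration.integral_cong) (auto simp: indicator_def)
    finally show ?thesis .
  qed
  have "(LBINT u=a..a+1. k (a + 1 + x - u)) = (LBINT u=-1..0. k (x - u))" for x
    by (simp add: interval_integral_eq_integral_indicator interval_integral_minus_one_zero shift)
  then show ?thesis
    by (simp add: interval_integral_eq_integral_indicator interval_integral_minus_one_zero shift)
qed

lemma double_interval_integral_diff_one:
  fixes k :: "real \<Rightarrow> real"
  assumes kc: "continuous_on UNIV k" and kpos: "\<And>x. 0 \<le> k x"
  shows "(LBINT s=-1..0. (LBINT u=-1..0. k (s - u) - 1)) = (LBINT s=-1..0. (LBINT u=-1..0. k (s - u))) - 1"
proof -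
  have one: "interval_lebesgue_integrable lborel (-1) 0 (\<lambda>x. 1::real)" "(LBINT x=-1..0. (1::real)) = 1"
    using interval_integral_const[of "-1" 0 1] by (simp_all add: ereal_minus_one zero_ereal_def)
  have inner: "interval_lebesgue_integrable lborel (-1) 0 (\<lambda>u. k (s - u))" for s
  proof -
    have "continuous_on UNIV (\<lambda>u. k (s - u))"
      by (rule continuous_on_compose2[OF kc]) (auto intro!: continuous_intros)
    then show ?thesis
      using interval_integrable_isCont[of "-1" 0 "\<lambda>u. k (s - u)"]
      by (simp add: continuous_on_eq_continuous_at ereal_minus_one zero_ereal_def)
  qed
  have outer: "interval_lebesgue_integrable lborel (-1) 0 (\<lambda>s. LBINT u=-1..0. k (s - u))"
    using double_interval_integral(1)[of "-1" 0 k, OF _ kc kpos] by (simp add: ereal_minus_one zero_ereal_def)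
  have "(LBINT u=-1..0. k (s - u) - 1) = (LBINT u=-1..0. k (s - u)) - 1" for s
    using interval_lebesgue_integral_diff(2)[OF inner[of s] one(1)] one(2) by simp
  then show ?thesis
    using interval_lebesgue_integral_diff(2)[OF outer one(1)] one(2) by simp
qed

lemma double_interval_integral_unit_window:
  fixes k :: "real \<Rightarrow> real" and a :: real
  assumes "continuous_on UNIV k" "\<And>x. 0 \<le> k x"
  shows "(LBINT s=a..a+1. (LBINT u=a..a+1. C * k (s - u))) - C
    = C * (LBINT s=-1..0. (LBINT u=-1..0. k (s - u) - 1))"
  using double_interval_integral_shift[of a k] double_interval_integral_diff_one[OF assms]
  by (simp add: right_diff_distrib)

lemma borel_measurable_continuous_process:
  fixes X :: "'a \<Rightarrow> real \<Rightarrow> real"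
  assumes m: "\<And>s. (\<lambda>\<omega>. X \<omega> s) \<in> borel_measurable M"
    and c: "\<And>\<omega>. \<omega> \<in> space M \<Longrightarrow> continuous_on UNIV (X \<omega>)"
  shows "(\<lambda>p. X (fst p) (snd p)) \<in> borel_measurable (M \<Otimes>\<^sub>M lborel)"
proof (rule borel_measurable_LIMSEQ_real)
  let ?g = "\<lambda>n::nat. \<lambda>s::real. real_of_int \<lfloor>real (Suc n) * s\<rfloor> / real (Suc n)"
  show "(\<lambda>p. X (fst p) (?g n (snd p))) \<in> borel_measurable (M \<Otimes>\<^sub>M lborel)" for n
  proof -
    have "(\<lambda>p. (\<lambda>k::int. \<lambda>p. X (fst p) (real_of_int k / real (Suc n))) (\<lfloor>real (Suc n) * snd p\<rfloor>) p)
          \<in> borel_measurable (M \<Otimes>\<^sub>M lborel)"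
    proof (rule measurable_compose_countable[where f="\<lambda>k p. X (fst p) (real_of_int k / real (Suc n))"])
      show "(\<lambda>p. X (fst p) (real_of_int k / real (Suc n))) \<in> borel_measurable (M \<Otimes>\<^sub>M lborel)" for k
        by (rule measurable_compose[OF measurable_fst m])
      show "(\<lambda>p. \<lfloor>real (Suc n) * snd p\<rfloor>) \<in> measurable (M \<Otimes>\<^sub>M lborel) (count_space UNIV)"
        by measurable
    qed
    then show ?thesis by simp
  qed
  show "(\<lambda>n. X (fst p) (?g n (snd p))) \<longlonglongrightarrow> X (fst p) (snd p)" if p: "p \<in> space (M \<Otimes>\<^sub>M lborel)" for p
  proof -
    have up: "?g n (snd p) \<le> snd p" for n
      using of_int_floor_le[of "real (Suc n) * snd p"] by (simp add: field_simps)
    have lo: "snd p - 1 / real (Suc n) \<le> ?g n (snd p)" for n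
    proof -
      have N: "real (Suc n) > 0" by simp
      have "real (Suc n) * snd p - 1 \<le> real_of_int \<lfloor>real (Suc n) * snd p\<rfloor>"
        using real_of_int_floor_gt_diff_one[of "real (Suc n) * snd p"] by linarith
      then have "(real (Suc n) * snd p - 1) / real (Suc n) \<le> ?g n (snd p)"
        using N by (intro divide_right_mono) auto
      moreover have "(real (Suc n) * snd p - 1) / real (Suc n) = snd p - 1 / real (Suc n)"
        using N by (simp add: field_simps)
      ultimately show ?thesis by simp
    qed
    have lim: "(\<lambda>n. snd p - 1 / real (Suc n)) \<longlonglongrightarrow> snd p"
      using tendsto_diff[OF tendsto_const LIMSEQ_inverse_real_of_nat] by (simp add: inverse_eq_divide)
    have "(\<lambda>n. ?g n (snd p)) \<longlonglongrightarrow> snd p"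
      by (rule real_tendsto_sandwich[OF always_eventually always_eventually lim tendsto_const]) (use lo up in auto)
    moreover have "isCont (X (fst p)) (snd p)"
      using c[of "fst p"] p by (auto simp: continuous_on_eq_continuous_at space_pair_measure)
    ultimately show ?thesis by (rule isCont_tendsto_compose[rotated])
  qed
qed

lemma nn_integral_swap_time_pair:
  fixes G :: "('a \<times> real) \<times> real \<Rightarrow> ennreal"
  assumes "sigma_finite_measure M"
    and Gm[measurable]: "G \<in> borel_measurable ((M \<Otimes>\<^sub>M lborel) \<Otimes>\<^sub>M lborel)"
  shows "(\<integral>\<^sup>+\<omega>. (\<integral>\<^sup>+s. (\<integral>\<^sup>+u. G ((\<omega>, s), u) \<partial>lborel) \<partial>lborel) \<partial>M)
    = (\<integral>\<^sup>+s. (\<integral>\<^sup>+u. (\<integral>\<^sup>+\<omega>. G ((\<omega>, s), u) \<partial>M) \<partial>lborel) \<partial>lborel)"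
proof -
  interpret sigma_finite_measure M by fact
  interpret pair_sigma_finite M lborel by unfold_locales
  have "(\<integral>\<^sup>+\<omega>. (\<integral>\<^sup>+s. (\<integral>\<^sup>+u. G ((\<omega>, s), u) \<partial>lborel) \<partial>lborel) \<partial>M)
      = (\<integral>\<^sup>+s. (\<integral>\<^sup>+\<omega>. (\<integral>\<^sup>+u. G ((\<omega>, s), u) \<partial>lborel) \<partial>M) \<partial>lborel)"
    by (rule Fubini[symmetric]) measurable
  also have "\<dots> = (\<integral>\<^sup>+s. (\<integral>\<^sup>+u. (\<integral>\<^sup>+\<omega>. G ((\<omega>, s), u) \<partial>M) \<partial>lborel) \<partial>lborel)"
  proof (intro nn_integral_cong)
    fix s
    have "(\<lambda>p. G ((fst p, s), snd p)) \<in> borel_measurable (M \<Otimes>\<^sub>M lborel)"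
      by (rule measurable_compose[OF _ Gm]) measurable
    then show "(\<integral>\<^sup>+\<omega>. (\<integral>\<^sup>+u. G ((\<omega>, s), u) \<partial>lborel) \<partial>M) = (\<integral>\<^sup>+u. (\<integral>\<^sup>+\<omega>. G ((\<omega>, s), u) \<partial>M) \<partial>lborel)"
      using Fubini[of "\<lambda>p. G ((fst p, s), snd p)"] by simp
  qed
  finally show ?thesis .
qed

context
  fixes M :: "'a measure" and Y :: "'a \<Rightarrow> real \<Rightarrow> real"
  assumes Y_measurable: "\<And>s. (\<lambda>\<omega>. Y \<omega> s) \<in> borel_measurable M"
    and Y_continuous: "\<And>\<omega>. \<omega> \<in> space M \<Longrightarrow> continuous_on UNIV (Y \<omega>)"
begin

lemma borel_measurable_path_integral_integrand:
  fixes a b :: real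
  shows "(\<lambda>p. indicator {a<..<b} (snd p) * Y (fst p) (snd p)) \<in> borel_measurable (M \<Otimes>\<^sub>M lborel)"
  using borel_measurable_continuous_process[OF Y_measurable Y_continuous] by measurable

lemma path_integral_measurable:
  fixes a b :: real
  assumes "a \<le> b"
  shows "(\<lambda>\<omega>. LBINT s=a..b. Y \<omega> s) \<in> borel_measurable M"
proof -
  note borel_measurable_path_integral_integrand[of a b, measurable]
  have "(\<lambda>\<omega>. \<integral>s. indicator {a<..<b} s * Y \<omega> s \<partial>lborel) \<in> borel_measurable M"
    by measurable
  then show ?thesis by (simp add: interval_integral_eq_integral_indicator[OF assms])
qed

context
  assumes M_sigma_finite: "sigma_finite_measure M"
    and Y_nonneg: "\<And>\<omega> s. 0 \<le> Y \<omega> s"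
begin

interpretation pair_sigma_finite M lborel
  using M_sigma_finite by (intro pair_sigma_finite.intro lborel.sigma_finite_measure_axioms)

lemma nn_integral_path_integral:
  fixes a b m :: real
  assumes ab: "a \<le> b" and first: "\<And>s. (\<integral>\<^sup>+\<omega>. ennreal (Y \<omega> s) \<partial>M) = ennreal m"
  shows "(\<integral>\<^sup>+\<omega>. ennreal (LBINT s=a..b. Y \<omega> s) \<partial>M) = ennreal (m * (b - a))"
proof -
  define F where "F p = indicator {a<..<b} (snd p) * Y (fst p) (snd p)" for p
  have Fm[measurable]: "F \<in> borel_measurable (M \<Otimes>\<^sub>M lborel)"
    unfolding F_def by (rule borel_measurable_path_integral_integrand)
  have "(\<integral>\<^sup>+\<omega>. ennreal (LBINT s=a..b. Y \<omega> s) \<partial>M) = (\<integral>\<^sup>+\<omega>. (\<integral>\<^sup>+s. ennreal (F (\<omega>, s)) \<partial>lborel) \<partial>M)"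
    using Y_continuous Y_nonneg
    by (intro nn_integral_cong) (simp add: F_def ennreal_interval_integral_continuous[OF ab])
  also have "\<dots> = (\<integral>\<^sup>+s. (\<integral>\<^sup>+\<omega>. ennreal (F (\<omega>, s)) \<partial>M) \<partial>lborel)"
    by (rule Fubini[symmetric]) measurable
  also have "\<dots> = (\<integral>\<^sup>+s. ennreal m * indicator {a<..<b} s \<partial>lborel)"
  proof (intro nn_integral_cong)
    fix s
    have "(\<integral>\<^sup>+\<omega>. ennreal (F (\<omega>, s)) \<partial>M) = (\<integral>\<^sup>+\<omega>. ennreal (Y \<omega> s) * indicator {a<..<b} s \<partial>M)"
      by (intro nn_integral_cong) (simp add: F_def indicator_def)
    also have "\<dots> = ennreal m * indicator {a<..<b} s"
      using Y_measurable by (simp add: nn_integral_multc first)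
    finally show "(\<integral>\<^sup>+\<omega>. ennreal (F (\<omega>, s)) \<partial>M) = ennreal m * indicator {a<..<b} s" .
  qed
  also have "\<dots> = ennreal (m * (b - a))"
    using ab by (simp add: nn_integral_cmult_indicator ennreal_mult'')
  finally show ?thesis .
qed

lemma nn_integral_path_integral_square:
  fixes a b :: real and k :: "real \<Rightarrow> real"
  assumes ab: "a \<le> b"
    and second: "\<And>s u. (\<integral>\<^sup>+\<omega>. ennreal (Y \<omega> s * Y \<omega> u) \<partial>M) = ennreal (k (s - u))"
    and kc: "continuous_on UNIV k" and kpos: "\<And>x. 0 \<le> k x"
  shows "(\<integral>\<^sup>+\<omega>. ennreal ((LBINT s=a..b. Y \<omega> s)\<^sup>2) \<partial>M)
    = ennreal (LBINT s=a..b. (LBINT u=a..b. k (s - u)))"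
proof -
  define Yp where "Yp p = Y (fst p) (snd p)" for p
  define G where "G q = ennreal (indicator {a<..<b} (snd (fst q)) * indicator {a<..<b} (snd q)
      * Yp (fst q) * Yp (fst (fst q), snd q))" for q :: "('a \<times> real) \<times> real"
  have Ypm: "Yp \<in> borel_measurable (M \<Otimes>\<^sub>M lborel)"
    unfolding Yp_def by (rule borel_measurable_continuous_process[OF Y_measurable Y_continuous])
  have "(\<lambda>q. Yp (fst q)) \<in> borel_measurable ((M \<Otimes>\<^sub>M lborel) \<Otimes>\<^sub>M lborel)"
    by (rule measurable_compose[OF _ Ypm]) measurable
  moreover have "(\<lambda>q. Yp (fst (fst q), snd q)) \<in> borel_measurable ((M \<Otimes>\<^sub>M lborel) \<Otimes>\<^sub>M lborel)"
    by (rule measurable_compose[OF _ Ypm]) measurable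
  ultimately have Gm[measurable]: "G \<in> borel_measurable ((M \<Otimes>\<^sub>M lborel) \<Otimes>\<^sub>M lborel)"
    unfolding G_def by measurable
  have "(\<integral>\<^sup>+\<omega>. ennreal ((LBINT s=a..b. Y \<omega> s)\<^sup>2) \<partial>M)
      = (\<integral>\<^sup>+\<omega>. (\<integral>\<^sup>+s. (\<integral>\<^sup>+u. G ((\<omega>, s), u) \<partial>lborel) \<partial>lborel) \<partial>M)"
    using Y_continuous Y_nonneg
    by (intro nn_integral_cong) (simp add: ennreal_interval_integral_square[OF ab] G_def Yp_def)
  also have "\<dots> = (\<integral>\<^sup>+s. (\<integral>\<^sup>+u. (\<integral>\<^sup>+\<omega>. G ((\<omega>, s), u) \<partial>M) \<partial>lborel) \<partial>lborel)"
    by (rule nn_integral_swap_time_pair[OF M_sigma_finite Gm])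
  also have "\<dots> = (\<integral>\<^sup>+s. (\<integral>\<^sup>+u. ennreal (indicator {a<..<b} s * indicator {a<..<b} u * k (s - u)) \<partial>lborel) \<partial>lborel)"
  proof (intro nn_integral_cong)
    fix s u
    have meas: "(\<lambda>\<omega>. ennreal (Y \<omega> s * Y \<omega> u)) \<in> borel_measurable M"
      using Y_measurable by measurable
    have "(\<integral>\<^sup>+\<omega>. G ((\<omega>, s), u) \<partial>M)
        = (\<integral>\<^sup>+\<omega>. ennreal (indicator {a<..<b} s * indicator {a<..<b} u) * ennreal (Y \<omega> s * Y \<omega> u) \<partial>M)"
      by (intro nn_integral_cong) (simp add: G_def Yp_def ennreal_mult[symmetric] Y_nonneg mult_ac)
    also have "\<dots> = ennreal (indicator {a<..<b} s * indicator {a<..<b} u) * ennreal (k (s - u))"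
      by (simp only: nn_integral_cmult[OF meas] second)
    also have "\<dots> = ennreal (indicator {a<..<b} s * indicator {a<..<b} u * k (s - u))"
      by (simp add: ennreal_mult kpos)
    finally show "(\<integral>\<^sup>+\<omega>. G ((\<omega>, s), u) \<partial>M)
        = ennreal (indicator {a<..<b} s * indicator {a<..<b} u * k (s - u))" .
  qed
  also have "\<dots> = ennreal (LBINT s=a..b. (LBINT u=a..b. k (s - u)))"
    by (rule double_interval_integral(2)[OF ab kc kpos, symmetric])
  finally show ?thesis .
qed

end

end

section \<open>Poisson moments\<close>

definition poisson_prob :: "nat \<Rightarrow> real \<Rightarrow> real" where
  "poisson_prob n x = exp (- x) * x ^ n / fact n"

lemma poisson_prob_nonneg: "0 \<le> x \<Longrightarrow> 0 \<le> poisson_prob n x"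
  by (simp add: poisson_prob_def)

lemma Suc_times_power_div_fact: "real (Suc n) * ((x::real) ^ Suc n / fact (Suc n)) = x * (x ^ n / fact n)"
  by (simp add: fact_Suc field_simps del: of_nat_Suc)

lemma poisson_moments_sums:
  fixes x :: real
  shows "(\<lambda>n. real n * poisson_prob n x) sums x"
    and "(\<lambda>n. (real n)\<^sup>2 * poisson_prob n x) sums (x + x\<^sup>2)"
proof -
  have e0: "(\<lambda>n. x ^ n / fact n) sums exp x"
    using exp_converges[of x] by (simp add: scaleR_conv_of_real divide_inverse mult.commute)
  define f where "f n = real n * (x ^ n / fact n)" for n
  have "(\<lambda>n. f (Suc n)) sums (x * exp x)"
    unfolding f_def Suc_times_power_div_fact by (rule sums_mult[OF e0])
  then have e1: "f sums (x * exp x)" by (subst (asm) sums_Suc_iff) (simp add: f_def)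
  define h where "h n = (real n)\<^sup>2 * (x ^ n / fact n)" for n
  have "h (Suc n) = x * (f n + x ^ n / fact n)" for n
  proof -
    have "h (Suc n) = real (Suc n) * (real (Suc n) * (x ^ Suc n / fact (Suc n)))"
      by (simp add: h_def power2_eq_square del: of_nat_Suc)
    also have "\<dots> = real (Suc n) * (x * (x ^ n / fact n))"
      by (simp only: Suc_times_power_div_fact)
    also have "\<dots> = x * (f n + x ^ n / fact n)"
      by (simp add: f_def field_simps)
    finally show ?thesis .
  qed
  then have "(\<lambda>n. h (Suc n)) sums (x * (x * exp x + exp x))"
    by (simp only:) (intro sums_mult sums_add e1 e0)
  then have e2: "h sums (x * (x * exp x + exp x))" by (subst (asm) sums_Suc_iff) (simp add: h_def)
  have ee: "exp (-x) * exp x = 1" by (simp add: exp_minus field_simps)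
  show "(\<lambda>n. real n * poisson_prob n x) sums x"
    using sums_mult[OF e1, of "exp (-x)"] ee unfolding f_def poisson_prob_def by (simp add: field_simps)
  show "(\<lambda>n. (real n)\<^sup>2 * poisson_prob n x) sums (x + x\<^sup>2)"
    using sums_mult[OF e2, of "exp (-x)"] ee unfolding h_def poisson_prob_def
    by (simp add: field_simps power2_eq_square)
qed

abbreviation seq_space :: "(int \<Rightarrow> real) measure" where
  "seq_space \<equiv> Pi\<^sub>M UNIV (\<lambda>_. borel)"

text \<open>Cardinalities and sums over an infinite set are 0, so replacing an infinite index set
  by the empty set changes neither; the truncated map takes values in the countable set of
  finite sets, which makes it measurable into a discrete space.\<close>
definition pts_index :: "real set \<Rightarrow> (int \<Rightarrow> real) \<Rightarrow> int set" where
  "pts_index A \<tau> = (if finite {k. \<tau> k \<in> A} then {k. \<tau> k \<in> A} else {})"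

lemma finite_pts_index [simp]: "finite (pts_index A \<tau>)"
  by (simp add: pts_index_def)

lemma card_pts_index: "card (pts_index A \<tau>) = card {k. \<tau> k \<in> A}"
  by (simp add: pts_index_def)

lemma sum_pts_index: "(\<Sum>k\<in>pts_index A \<tau>. f k) = (\<Sum>k | \<tau> k \<in> A. f k)"
  by (simp add: pts_index_def)

lemma pts_index_measurable:
  assumes A: "A \<in> sets borel"
  shows "pts_index A \<in> measurable seq_space (count_space {J. finite J})"
proof (rule measurable_count_space_eq_countable[THEN iffD2, OF countable_Collect_finite], intro conjI)
  show "pts_index A \<in> space seq_space \<rightarrow> {J. finite J}" by simp
  show "\<forall>J\<in>{J. finite J}. pts_index A -` {J} \<inter> space seq_space \<in> sets seq_space"
  proof
    fix J :: "int set" assume "J \<in> {J. finite J}"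
    have "{\<tau> \<in> space seq_space. \<forall>k. (\<tau> k \<in> A) = (k \<in> J)} \<in> sets seq_space"
      using A by measurable
    then have exact: "{\<tau> \<in> space seq_space. {k. \<tau> k \<in> A} = J} \<in> sets seq_space"
      by (simp add: set_eq_iff)
    have "{\<tau> \<in> space seq_space. \<forall>m::int. \<exists>k. \<bar>k\<bar> > m \<and> \<tau> k \<in> A} \<in> sets seq_space"
      using A by measurable
    then have unbounded: "{\<tau> \<in> space seq_space. infinite {k. \<tau> k \<in> A}} \<in> sets seq_space"
      by (simp add: infinite_int_iff_unbounded)
    have "pts_index A -` {J} \<inter> space seq_space =
        {\<tau> \<in> space seq_space. {k. \<tau> k \<in> A} = J} \<union>
        (if J = {} then {\<tau> \<in> space seq_space. infinite {k. \<tau> k \<in> A}} else {})"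
      using \<open>J \<in> {J. finite J}\<close> unfolding pts_index_def by (auto split: if_splits)
    then show "pts_index A -` {J} \<inter> space seq_space \<in> sets seq_space"
      using exact unbounded by auto
  qed
qed

lemma nn_integral_countable_partition:
  fixes g :: "'a \<Rightarrow> 'i" and f :: "'i \<Rightarrow> 'a \<Rightarrow> ennreal"
  assumes "sigma_finite_measure M" and I: "countable I" and g: "g \<in> measurable M (count_space I)"
    and fm: "\<And>J. J \<in> I \<Longrightarrow> f J \<in> borel_measurable M"
  shows "(\<integral>\<^sup>+\<omega>. f (g \<omega>) \<omega> \<partial>M)
    = (\<integral>\<^sup>+J. (\<integral>\<^sup>+\<omega>. f J \<omega> * indicator {\<omega> \<in> space M. g \<omega> = J} \<omega> \<partial>M) \<partial>count_space I)"
proof -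
  interpret sigma_finite_measure M by fact
  interpret C: sigma_finite_measure "count_space I"
    by (rule sigma_finite_measure_count_space_countable[OF I])
  interpret PS: pair_sigma_finite M "count_space I" by unfold_locales
  define H where "H p = f (snd p) (fst p) * indicator {g (fst p)} (snd p)" for p
  have "(\<lambda>p. (\<lambda>J p. f J (fst p) * indicator {g (fst p)} J) (snd p) p) \<in> borel_measurable (M \<Otimes>\<^sub>M count_space I)"
  proof (rule measurable_compose_countable'[OF _ _ I])
    show "(\<lambda>p. f J (fst p) * indicator {g (fst p)} J) \<in> borel_measurable (M \<Otimes>\<^sub>M count_space I)"
      if "J \<in> I" for J
    proof -
      have "{\<omega> \<in> space M. g \<omega> = J} \<in> sets M"
        using measurable_sets[OF g, of "{J}"] that by (simp add: vimage_def Int_def conj_commute)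
      then have "(\<lambda>\<omega>. indicator {g \<omega>} J :: ennreal) \<in> borel_measurable M"
        by (rule borel_measurable_indicator[THEN measurable_cong[THEN iffD1, rotated]])
           (auto simp: indicator_def)
      then show ?thesis using fm[OF that] by measurable
    qed
  qed simp
  then have Hm: "H \<in> borel_measurable (M \<Otimes>\<^sub>M count_space I)" by (simp add: H_def[abs_def])
  have "(\<integral>\<^sup>+\<omega>. f (g \<omega>) \<omega> \<partial>M) = (\<integral>\<^sup>+\<omega>. (\<integral>\<^sup>+J. H (\<omega>, J) \<partial>count_space I) \<partial>M)"
    using measurable_space[OF g] by (intro nn_integral_cong) (simp add: H_def)
  also have "\<dots> = (\<integral>\<^sup>+J. (\<integral>\<^sup>+\<omega>. H (\<omega>, J) \<partial>M) \<partial>count_space I)"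
    by (rule PS.Fubini[symmetric, OF Hm])
  also have "\<dots> = (\<integral>\<^sup>+J. (\<integral>\<^sup>+\<omega>. f J \<omega> * indicator {\<omega> \<in> space M. g \<omega> = J} \<omega> \<partial>M) \<partial>count_space I)"
    by (intro nn_integral_cong) (auto simp: H_def indicator_def)
  finally show ?thesis .
qed

lemma nn_integral_cong_countable_partition:
  fixes g :: "'a \<Rightarrow> 'i" and f1 f2 :: "'i \<Rightarrow> 'a \<Rightarrow> ennreal"
  assumes M: "sigma_finite_measure M" and I: "countable I" and g: "g \<in> measurable M (count_space I)"
    and f1: "\<And>J. J \<in> I \<Longrightarrow> f1 J \<in> borel_measurable M"
    and f2: "\<And>J. J \<in> I \<Longrightarrow> f2 J \<in> borel_measurable M"
    and eq: "\<And>J. J \<in> I \<Longrightarrow> (\<integral>\<^sup>+\<omega>. f1 J \<omega> * indicator {\<omega> \<in> space M. g \<omega> = J} \<omega> \<partial>M)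
                              = (\<integral>\<^sup>+\<omega>. f2 J \<omega> * indicator {\<omega> \<in> space M. g \<omega> = J} \<omega> \<partial>M)"
  shows "(\<integral>\<^sup>+\<omega>. f1 (g \<omega>) \<omega> \<partial>M) = (\<integral>\<^sup>+\<omega>. f2 (g \<omega>) \<omega> \<partial>M)"
proof -
  have "(\<integral>\<^sup>+\<omega>. f1 (g \<omega>) \<omega> \<partial>M)
      = (\<integral>\<^sup>+J. (\<integral>\<^sup>+\<omega>. f1 J \<omega> * indicator {\<omega> \<in> space M. g \<omega> = J} \<omega> \<partial>M) \<partial>count_space I)"
    by (rule nn_integral_countable_partition[OF M I g f1])
  also have "\<dots> = (\<integral>\<^sup>+J. (\<integral>\<^sup>+\<omega>. f2 J \<omega> * indicator {\<omega> \<in> space M. g \<omega> = J} \<omega> \<partial>M) \<partial>count_space I)"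
    by (intro nn_integral_cong eq) simp
  also have "\<dots> = (\<integral>\<^sup>+\<omega>. f2 (g \<omega>) \<omega> \<partial>M)"
    by (rule nn_integral_countable_partition[OF M I g f2, symmetric])
  finally show ?thesis .
qed

section \<open>Cox processes with a continuous intensity\<close>

lemma subalgebra_vimage_algebra_coordinates:
  fixes X :: "'a \<Rightarrow> 'i \<Rightarrow> real"
  assumes "\<And>i. (\<lambda>\<omega>. X \<omega> i) \<in> borel_measurable M"
  shows "subalgebra M (vimage_algebra (space M) X (Pi\<^sub>M UNIV (\<lambda>_. borel)))"
proof -
  have "X \<in> measurable M (Pi\<^sub>M UNIV (\<lambda>_. borel))"
    by (rule measurable_PiM_single') (auto simp: assms)
  then show ?thesis unfolding subalgebra_def measurable_iff_sets by simp
qed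

locale cox_process = prob_space M
  for M :: "'a measure" and F :: "'a measure"
    and Y :: "'a \<Rightarrow> real \<Rightarrow> real" and T :: "'a \<Rightarrow> int \<Rightarrow> real" +
  assumes subalgebra_F: "subalgebra M F"
    and Y_measurable: "\<And>s. (\<lambda>\<omega>. Y \<omega> s) \<in> borel_measurable M"
    and Y_continuous: "\<And>\<omega>. \<omega> \<in> space M \<Longrightarrow> continuous_on UNIV (Y \<omega>)"
    and Y_nonneg: "\<And>\<omega> s. 0 \<le> Y \<omega> s"
    and T_measurable: "\<And>k. (\<lambda>\<omega>. T \<omega> k) \<in> borel_measurable M"
    and cox: "cox_given M F (\<lambda>\<omega> a b. LBINT s=a..b. Y \<omega> s) T"
begin

sublocale cond: sigma_finite_subalgebra M F
  by (rule finite_measure_subalgebra_is_sigma_finite)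
     (intro finite_measure_subalgebra.intro finite_measure_axioms
        finite_measure_subalgebra_axioms.intro subalgebra_F)

lemma T_measurable_seq: "T \<in> measurable M seq_space"
  by (rule measurable_PiM_single') (auto simp: T_measurable)

lemma pts_index_T_measurable:
  "A \<in> sets borel \<Longrightarrow> (\<lambda>\<omega>. pts_index A (T \<omega>)) \<in> measurable M (count_space {J. finite J})"
  using measurable_comp[OF T_measurable_seq pts_index_measurable] by (simp add: comp_def)

lemma count_pts_eq_card_pts_index: "count_pts T \<omega> A = card (pts_index A (T \<omega>))"
  by (simp add: count_pts_def card_pts_index)

lemma count_pts_measurable [measurable]:
  "A \<in> sets borel \<Longrightarrow> (\<lambda>\<omega>. count_pts T \<omega> A) \<in> measurable M (count_space UNIV)"
  using measurable_comp[OF pts_index_T_measurable, of A card "count_space UNIV"]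
  by (simp add: comp_def count_pts_eq_card_pts_index)

definition cum_intensity :: "real \<Rightarrow> real \<Rightarrow> 'a \<Rightarrow> real" where
  "cum_intensity a b \<omega> = (LBINT s=a..b. Y \<omega> s)"

lemma cum_intensity_measurable: "a \<le> b \<Longrightarrow> cum_intensity a b \<in> borel_measurable M"
  unfolding cum_intensity_def[abs_def] by (rule path_integral_measurable[OF Y_measurable Y_continuous])

lemma cum_intensity_nonneg: "a \<le> b \<Longrightarrow> 0 \<le> cum_intensity a b \<omega>"
  unfolding cum_intensity_def by (rule interval_integral_nonneg) (use Y_nonneg in auto)

lemma prob_count_pts_eq:
  assumes ab: "a \<le> b"
  shows "integrable M (\<lambda>\<omega>. poisson_prob n (cum_intensity a b \<omega>))"
    and "prob {\<omega> \<in> space M. count_pts T \<omega> {a<..b} = n} = (\<integral>\<omega>. poisson_prob n (cum_intensity a b \<omega>) \<partial>M)"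
proof -
  define C where "C = {\<omega> \<in> space M. count_pts T \<omega> {a<..b} = n}"
  have Cm: "C \<in> sets M" unfolding C_def by measurable
  have ae: "AE \<omega> in M. real_cond_exp M F (indicator C) \<omega> = poisson_prob n (cum_intensity a b \<omega>)"
    using cox[unfolded cox_given_def, rule_format, of 1 "\<lambda>_. a" "\<lambda>_. b" "\<lambda>_. n"] ab
    by (simp add: C_def poisson_prob_def cum_intensity_def)
  have IC: "integrable M (indicator C :: 'a \<Rightarrow> real)"
    using Cm by (intro integrable_real_indicator) (simp_all add: less_top[symmetric])
  have Im: "integrable M (real_cond_exp M F (indicator C))"
    by (rule cond.real_cond_exp_int(1)[OF IC])
  have pm: "(\<lambda>\<omega>. poisson_prob n (cum_intensity a b \<omega>)) \<in> borel_measurable M"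
    using cum_intensity_measurable[OF ab] unfolding poisson_prob_def by measurable
  show "integrable M (\<lambda>\<omega>. poisson_prob n (cum_intensity a b \<omega>))"
    by (rule integrable_cong_AE[THEN iffD1, OF _ pm ae Im]) (rule borel_measurable_integrable[OF Im])
  have "prob C = (\<integral>\<omega>. indicator C \<omega> \<partial>M)" using Cm by simp
  also have "\<dots> = (\<integral>\<omega>. real_cond_exp M F (indicator C) \<omega> \<partial>M)"
    by (rule cond.real_cond_exp_int(2)[OF IC, symmetric])
  also have "\<dots> = (\<integral>\<omega>. poisson_prob n (cum_intensity a b \<omega>) \<partial>M)"
    by (rule integral_cong_AE[OF borel_measurable_integrable[OF Im] pm ae])
  finally show "prob {\<omega> \<in> space M. count_pts T \<omega> {a<..b} = n} = (\<integral>\<omega>. poisson_prob n (cum_intensity a b \<omega>) \<partial>M)"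
    unfolding C_def .
qed

lemma nn_integral_count_pts_weight:
  fixes w :: "nat \<Rightarrow> real" and W :: "real \<Rightarrow> real"
  assumes ab: "a \<le> b" and wpos: "\<And>n. 0 \<le> w n"
    and ws: "\<And>x. 0 \<le> x \<Longrightarrow> (\<lambda>n. w n * poisson_prob n x) sums W x"
  shows "(\<integral>\<^sup>+\<omega>. ennreal (w (count_pts T \<omega> {a<..b})) \<partial>M) = (\<integral>\<^sup>+\<omega>. ennreal (W (cum_intensity a b \<omega>)) \<partial>M)"
proof -
  define C where "C n = {\<omega> \<in> space M. count_pts T \<omega> {a<..b} = n}" for n
  have Cm: "C n \<in> sets M" for n unfolding C_def by measurable
  have ppos: "0 \<le> poisson_prob n (cum_intensity a b \<omega>)" for n \<omega>
    by (rule poisson_prob_nonneg[OF cum_intensity_nonneg[OF ab]])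
  have pm: "(\<lambda>\<omega>. poisson_prob n (cum_intensity a b \<omega>)) \<in> borel_measurable M" for n
    using cum_intensity_measurable[OF ab] unfolding poisson_prob_def by measurable
  have "(\<integral>\<^sup>+\<omega>. ennreal (w (count_pts T \<omega> {a<..b})) \<partial>M) = (\<integral>\<^sup>+\<omega>. (\<Sum>n. ennreal (w n) * indicator (C n) \<omega>) \<partial>M)"
  proof (intro nn_integral_cong)
    fix \<omega> assume "\<omega> \<in> space M"
    then have "(\<lambda>n. ennreal (w n) * indicator (C n) \<omega>) = (\<lambda>n. if n = count_pts T \<omega> {a<..b} then ennreal (w n) else 0)"
      by (auto simp: C_def indicator_def)
    then show "ennreal (w (count_pts T \<omega> {a<..b})) = (\<Sum>n. ennreal (w n) * indicator (C n) \<omega>)"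
      using sums_unique[OF sums_single[of "count_pts T \<omega> {a<..b}" "\<lambda>n. ennreal (w n)"]] by simp
  qed
  also have "\<dots> = (\<Sum>n. \<integral>\<^sup>+\<omega>. ennreal (w n) * indicator (C n) \<omega> \<partial>M)"
    by (rule nn_integral_suminf) (use Cm in measurable)
  also have "\<dots> = (\<Sum>n. \<integral>\<^sup>+\<omega>. ennreal (w n * poisson_prob n (cum_intensity a b \<omega>)) \<partial>M)"
  proof (intro suminf_cong)
    fix n
    have "(\<integral>\<^sup>+\<omega>. ennreal (w n) * indicator (C n) \<omega> \<partial>M) = ennreal (w n) * ennreal (prob (C n))"
      using Cm by (simp add: nn_integral_cmult_indicator emeasure_eq_measure)
    also have "\<dots> = ennreal (\<integral>\<omega>. w n * poisson_prob n (cum_intensity a b \<omega>) \<partial>M)"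
      using prob_count_pts_eq(2)[OF ab, of n] wpos[of n] integral_nonneg_AE[of "\<lambda>\<omega>. poisson_prob n (cum_intensity a b \<omega>)" M]
      by (simp add: C_def ennreal_mult ppos)
    also have "\<dots> = (\<integral>\<^sup>+\<omega>. ennreal (w n * poisson_prob n (cum_intensity a b \<omega>)) \<partial>M)"
      by (rule nn_integral_eq_integral[symmetric])
         (use prob_count_pts_eq(1)[OF ab, of n] wpos[of n] ppos in auto)
    finally show "(\<integral>\<^sup>+\<omega>. ennreal (w n) * indicator (C n) \<omega> \<partial>M)
        = (\<integral>\<^sup>+\<omega>. ennreal (w n * poisson_prob n (cum_intensity a b \<omega>)) \<partial>M)" .
  qed
  also have "\<dots> = (\<integral>\<^sup>+\<omega>. (\<Sum>n. ennreal (w n * poisson_prob n (cum_intensity a b \<omega>))) \<partial>M)"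
    by (intro nn_integral_suminf[symmetric]) (use pm in measurable)
  also have "\<dots> = (\<integral>\<^sup>+\<omega>. ennreal (W (cum_intensity a b \<omega>)) \<partial>M)"
  proof (intro nn_integral_cong)
    fix \<omega>
    have s: "(\<lambda>n. w n * poisson_prob n (cum_intensity a b \<omega>)) sums W (cum_intensity a b \<omega>)"
      by (rule ws[OF cum_intensity_nonneg[OF ab]])
    have "(\<Sum>n. ennreal (w n * poisson_prob n (cum_intensity a b \<omega>)))
        = ennreal (\<Sum>n. w n * poisson_prob n (cum_intensity a b \<omega>))"
      by (rule suminf_ennreal2) (use s wpos ppos in \<open>auto intro: sums_summable\<close>)
    then show "(\<Sum>n. ennreal (w n * poisson_prob n (cum_intensity a b \<omega>))) = ennreal (W (cum_intensity a b \<omega>))"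
      using sums_unique[OF s] by simp
  qed
  finally show ?thesis .
qed

lemma nn_integral_count_pts:
  assumes ab: "a \<le> b" and first: "\<And>s. (\<integral>\<^sup>+\<omega>. ennreal (Y \<omega> s) \<partial>M) = ennreal m"
  shows "(\<integral>\<^sup>+\<omega>. ennreal (real (count_pts T \<omega> {a<..b})) \<partial>M) = ennreal (m * (b - a))"
proof -
  have "(\<integral>\<^sup>+\<omega>. ennreal (real (count_pts T \<omega> {a<..b})) \<partial>M) = (\<integral>\<^sup>+\<omega>. ennreal (cum_intensity a b \<omega>) \<partial>M)"
    by (rule nn_integral_count_pts_weight[OF ab]) (use poisson_moments_sums(1) in auto)
  also have "\<dots> = ennreal (m * (b - a))"
    unfolding cum_intensity_def
    by (rule nn_integral_path_integral[OF Y_measurable Y_continuous sigma_finite_measure_axioms Y_nonneg ab first])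
  finally show ?thesis .
qed

lemma nn_integral_count_pts_square:
  assumes ab: "a \<le> b" and m: "0 \<le> m"
    and first: "\<And>s. (\<integral>\<^sup>+\<omega>. ennreal (Y \<omega> s) \<partial>M) = ennreal m"
    and second: "\<And>s u. (\<integral>\<^sup>+\<omega>. ennreal (Y \<omega> s * Y \<omega> u) \<partial>M) = ennreal (k (s - u))"
    and kc: "continuous_on UNIV k" and kpos: "\<And>x. 0 \<le> k x"
  shows "(\<integral>\<^sup>+\<omega>. ennreal ((real (count_pts T \<omega> {a<..b}))\<^sup>2) \<partial>M)
    = ennreal (m * (b - a) + (LBINT s=a..b. (LBINT u=a..b. k (s - u))))"
proof -
  have "(\<integral>\<^sup>+\<omega>. ennreal ((real (count_pts T \<omega> {a<..b}))\<^sup>2) \<partial>M)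
      = (\<integral>\<^sup>+\<omega>. ennreal (cum_intensity a b \<omega> + (cum_intensity a b \<omega>)\<^sup>2) \<partial>M)"
    by (rule nn_integral_count_pts_weight[OF ab]) (use poisson_moments_sums(2) in auto)
  also have "\<dots> = (\<integral>\<^sup>+\<omega>. ennreal (cum_intensity a b \<omega>) + ennreal ((cum_intensity a b \<omega>)\<^sup>2) \<partial>M)"
    by (intro nn_integral_cong) (simp add: cum_intensity_nonneg[OF ab] ennreal_plus)
  also have "\<dots> = (\<integral>\<^sup>+\<omega>. ennreal (cum_intensity a b \<omega>) \<partial>M) + (\<integral>\<^sup>+\<omega>. ennreal ((cum_intensity a b \<omega>)\<^sup>2) \<partial>M)"
    by (rule nn_integral_add) (use cum_intensity_measurable[OF ab] in measurable)
  also have "\<dots> = ennreal (m * (b - a)) + ennreal (LBINT s=a..b. (LBINT u=a..b. k (s - u)))"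
    unfolding cum_intensity_def
    using nn_integral_path_integral[OF Y_measurable Y_continuous sigma_finite_measure_axioms Y_nonneg ab first]
      nn_integral_path_integral_square[OF Y_measurable Y_continuous sigma_finite_measure_axioms Y_nonneg ab second kc kpos]
    by simp
  also have "\<dots> = ennreal (m * (b - a) + (LBINT s=a..b. (LBINT u=a..b. k (s - u))))"
    using ab m double_interval_integral_nonneg[where k = k, OF ab kpos] by (simp add: ennreal_plus)
  finally show ?thesis .
qed

end

locale iid_shocks = prob_space M for M :: "'a measure" +
  fixes e :: "int \<Rightarrow> 'a \<Rightarrow> real" and sig :: real
  assumes e_indep: "indep_vars (\<lambda>_. borel) e UNIV"
    and e_ident: "\<And>k. distr M borel (e k) = distr M borel (e 0)"
    and e_square_integrable: "integrable M (\<lambda>\<omega>. (e 0 \<omega>)\<^sup>2)"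
    and e_mean: "expectation (e 0) = 0"
    and e_var: "variance (e 0) = sig\<^sup>2"
begin

lemma shock_measurable [measurable]: "e k \<in> borel_measurable M"
  using e_indep unfolding indep_vars_def by auto

lemma shock_identically_distributed:
  fixes f :: "real \<Rightarrow> real"
  assumes [measurable]: "f \<in> borel_measurable borel"
  shows "integrable M (\<lambda>\<omega>. f (e k \<omega>)) \<longleftrightarrow> integrable M (\<lambda>\<omega>. f (e 0 \<omega>))"
    and "(\<integral>\<omega>. f (e k \<omega>) \<partial>M) = (\<integral>\<omega>. f (e 0 \<omega>) \<partial>M)"
  using integrable_distr_eq[of "e k" M borel f] integrable_distr_eq[of "e 0" M borel f]
    integral_distr[of "e k" M borel f] integral_distr[of "e 0" M borel f] e_ident[of k]
  by simp_all

lemma shock_moments: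
  shows "integrable M (e k)" "integrable M (\<lambda>\<omega>. (e k \<omega>)\<^sup>2)"
    and "expectation (e k) = 0" "expectation (\<lambda>\<omega>. (e k \<omega>)\<^sup>2) = sig\<^sup>2"
proof -
  have i1: "integrable M (e 0)"
    by (rule square_integrable_imp_integrable[OF shock_measurable e_square_integrable])
  show "integrable M (e k)" using shock_identically_distributed(1)[of "\<lambda>x. x" k] i1 by simp
  show "integrable M (\<lambda>\<omega>. (e k \<omega>)\<^sup>2)"
    using shock_identically_distributed(1)[of "\<lambda>x. x\<^sup>2" k] e_square_integrable by simp
  show "expectation (e k) = 0" using shock_identically_distributed(2)[of "\<lambda>x. x" k] e_mean by simp
  have "expectation (\<lambda>\<omega>. (e 0 \<omega>)\<^sup>2) = sig\<^sup>2"
    using e_var e_mean variance_eq[OF i1 e_square_integrable] by simp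
  then show "expectation (\<lambda>\<omega>. (e k \<omega>)\<^sup>2) = sig\<^sup>2"
    using shock_identically_distributed(2)[of "\<lambda>x. x\<^sup>2" k] by simp
qed

lemma shock_product_moments:
  assumes "j \<noteq> k"
  shows "integrable M (\<lambda>\<omega>. e j \<omega> * e k \<omega>)" "expectation (\<lambda>\<omega>. e j \<omega> * e k \<omega>) = 0"
proof -
  have ind: "indep_vars (\<lambda>_. borel) e {j, k}" by (rule indep_vars_subset[OF e_indep]) auto
  have ii: "\<And>i. i \<in> {j, k} \<Longrightarrow> integrable M (e i)" using shock_moments(1) by auto
  have "(\<lambda>\<omega>. \<Prod>i\<in>{j,k}. e i \<omega>) = (\<lambda>\<omega>. e j \<omega> * e k \<omega>)" using assms by auto
  then show "integrable M (\<lambda>\<omega>. e j \<omega> * e k \<omega>)" "expectation (\<lambda>\<omega>. e j \<omega> * e k \<omega>) = 0"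
    using indep_vars_integrable[OF _ ind ii] indep_vars_lebesgue_integral[OF _ ind ii] assms
    by (simp_all add: shock_moments(3))
qed

lemma shifted_sum_shocks_second_moment:
  assumes J: "finite J"
  shows "integrable M (\<lambda>\<omega>. (d + (\<Sum>k\<in>J. e k \<omega>))\<^sup>2)"
    and "expectation (\<lambda>\<omega>. (d + (\<Sum>k\<in>J. e k \<omega>))\<^sup>2) = d\<^sup>2 + real (card J) * sig\<^sup>2"
proof -
  have expand: "(d + (\<Sum>k\<in>J. e k \<omega>))\<^sup>2 = d\<^sup>2 + (\<Sum>k\<in>J. 2 * d * e k \<omega>) + (\<Sum>j\<in>J. \<Sum>k\<in>J. e j \<omega> * e k \<omega>)" for \<omega>
    by (simp add: power2_eq_square algebra_simps sum_product sum_distrib_left)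
  have ijk: "integrable M (\<lambda>\<omega>. e j \<omega> * e k \<omega>)" for j k
    by (cases "j = k") (use shock_moments(2)[of j] shock_product_moments[of j k] in \<open>auto simp: power2_eq_square\<close>)
  have ejk: "expectation (\<lambda>\<omega>. e j \<omega> * e k \<omega>) = (if j = k then sig\<^sup>2 else 0)" for j k
    by (cases "j = k") (use shock_moments(4)[of j] shock_product_moments[of j k] in \<open>auto simp: power2_eq_square\<close>)
  show "integrable M (\<lambda>\<omega>. (d + (\<Sum>k\<in>J. e k \<omega>))\<^sup>2)"
    unfolding expand using shock_moments(1) ijk by (intro Bochner_Integration.integrable_add integrable_sum) auto
  have "expectation (\<lambda>\<omega>. (d + (\<Sum>k\<in>J. e k \<omega>))\<^sup>2) = d\<^sup>2 + (\<Sum>j\<in>J. \<Sum>k\<in>J. expectation (\<lambda>\<omega>. e j \<omega> * e k \<omega>))"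
    unfolding expand using shock_moments(1,3) ijk
    by (simp add: Bochner_Integration.integral_add Bochner_Integration.integral_sum integrable_sum prob_space)
  also have "\<dots> = d\<^sup>2 + real (card J) * sig\<^sup>2" unfolding ejk using J by (simp add: sum.delta)
  finally show "expectation (\<lambda>\<omega>. (d + (\<Sum>k\<in>J. e k \<omega>))\<^sup>2) = d\<^sup>2 + real (card J) * sig\<^sup>2" .
qed

end

section \<open>Returns of a Cox process with independent shocks\<close>

locale marked_cox = cox_process M F Y T + iid_shocks M e sig
  for M :: "'a measure" and F Y T e sig +
  assumes shocks_indep_points: "indep_var seq_space (\<lambda>\<omega> k. e k \<omega>) seq_space T"
begin

definition window_return :: "real \<Rightarrow> real \<Rightarrow> real \<Rightarrow> 'a \<Rightarrow> real" where
  "window_return mu a b \<omega> = mu * real (count_pts T \<omega> {a<..b}) + (\<Sum>k\<in>{k. T \<omega> k \<in> {a<..b}}. e k \<omega>)"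

lemma integral_shocks_times_index_event:
  fixes \<psi> :: "(int \<Rightarrow> real) \<Rightarrow> real"
  assumes A: "A \<in> sets borel" and J: "finite J"
    and \<psi>m: "\<psi> \<in> borel_measurable seq_space" and \<psi>i: "integrable M (\<lambda>\<omega>. \<psi> (\<lambda>k. e k \<omega>))"
  defines "G \<equiv> {\<omega> \<in> space M. pts_index A (T \<omega>) = J}"
  shows "integrable M (\<lambda>\<omega>. \<psi> (\<lambda>k. e k \<omega>) * indicator G \<omega>)"
    and "(\<integral>\<omega>. \<psi> (\<lambda>k. e k \<omega>) * indicator G \<omega> \<partial>M) = prob G * (\<integral>\<omega>. \<psi> (\<lambda>k. e k \<omega>) \<partial>M)"
proof -
  define GG where "GG = {\<tau> \<in> space seq_space. pts_index A \<tau> = J}"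
  have GGm: "GG \<in> sets seq_space"
    using measurable_sets[OF pts_index_measurable[OF A], of "{J}"] J
    by (simp add: GG_def vimage_def Int_def conj_commute)
  have ind: "indep_var borel (\<psi> \<circ> (\<lambda>\<omega> k. e k \<omega>)) borel (indicator GG \<circ> T)"
    by (rule indep_var_compose[OF shocks_indep_points \<psi>m]) (rule borel_measurable_indicator[OF GGm])
  have GG_T: "(indicator GG (T \<omega>) :: real) = indicator G \<omega>" if "\<omega> \<in> space M" for \<omega>
    using measurable_space[OF T_measurable_seq that] that by (auto simp: GG_def G_def indicator_def)
  have Gm: "G \<in> sets M"
    using measurable_sets[OF T_measurable_seq GGm] unfolding G_def GG_def
    by (simp add: vimage_def Int_def conj_commute space_PiM PiE_def extensional_def)
  have IG: "integrable M (indicator GG \<circ> T :: 'a \<Rightarrow> real)"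
  proof -
    have "integrable M (indicator G :: 'a \<Rightarrow> real)" using Gm by (simp add: less_top[symmetric])
    moreover have "integrable M (indicator G :: 'a \<Rightarrow> real) \<longleftrightarrow> integrable M (indicator GG \<circ> T :: 'a \<Rightarrow> real)"
      by (rule Bochner_Integration.integrable_cong) (auto simp: GG_T)
    ultimately show ?thesis by simp
  qed
  have I\<psi>: "integrable M (\<psi> \<circ> (\<lambda>\<omega> k. e k \<omega>))" using \<psi>i by (simp add: comp_def)
  have "integrable M (\<lambda>\<omega>. (\<psi> \<circ> (\<lambda>\<omega> k. e k \<omega>)) \<omega> * (indicator GG \<circ> T) \<omega>)"
    by (rule indep_var_integrable[OF ind I\<psi> IG])
  moreover have "integrable M (\<lambda>\<omega>. (\<psi> \<circ> (\<lambda>\<omega> k. e k \<omega>)) \<omega> * (indicator GG \<circ> T) \<omega>)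
      \<longleftrightarrow> integrable M (\<lambda>\<omega>. \<psi> (\<lambda>k. e k \<omega>) * indicator G \<omega>)"
    by (rule Bochner_Integration.integrable_cong) (auto simp: GG_T)
  ultimately show "integrable M (\<lambda>\<omega>. \<psi> (\<lambda>k. e k \<omega>) * indicator G \<omega>)" by simp
  have "(\<integral>\<omega>. \<psi> (\<lambda>k. e k \<omega>) * indicator G \<omega> \<partial>M)
      = (\<integral>\<omega>. (\<psi> \<circ> (\<lambda>\<omega> k. e k \<omega>)) \<omega> * (indicator GG \<circ> T) \<omega> \<partial>M)"
    by (intro Bochner_Integration.integral_cong) (auto simp: GG_T)
  also have "\<dots> = (\<integral>\<omega>. (\<psi> \<circ> (\<lambda>\<omega> k. e k \<omega>)) \<omega> \<partial>M) * (\<integral>\<omega>. (indicator GG \<circ> T) \<omega> \<partial>M)"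
    by (rule indep_var_lebesgue_integral[OF ind I\<psi> IG])
  also have "(\<integral>\<omega>. (indicator GG \<circ> T) \<omega> \<partial>M) = (\<integral>\<omega>. (indicator G \<omega> :: real) \<partial>M)"
    by (intro Bochner_Integration.integral_cong) (auto simp: GG_T)
  finally show "(\<integral>\<omega>. \<psi> (\<lambda>k. e k \<omega>) * indicator G \<omega> \<partial>M) = prob G * (\<integral>\<omega>. \<psi> (\<lambda>k. e k \<omega>) \<partial>M)"
    using Gm by (simp add: comp_def mult.commute)
qed

text \<open>Conditionally on the set of indices of the points in the window, the shocks are still
  i.i.d. and centred, so only the number of points survives.\<close>
lemma nn_integral_window_return_square:
  "(\<integral>\<^sup>+\<omega>. ennreal ((window_return mu a b \<omega> - c)\<^sup>2) \<partial>M)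
     = (\<integral>\<^sup>+\<omega>. ennreal ((mu * real (count_pts T \<omega> {a<..b}) - c)\<^sup>2 + real (count_pts T \<omega> {a<..b}) * sig\<^sup>2) \<partial>M)"
proof -
  define g where "g \<omega> = pts_index {a<..b} (T \<omega>)" for \<omega>
  define f1 where "f1 J \<omega> = ennreal ((mu * real (card J) + (\<Sum>k\<in>J. e k \<omega>) - c)\<^sup>2)" for J :: "int set" and \<omega>
  define f2 where "f2 J \<omega> = ennreal ((mu * real (card J) - c)\<^sup>2 + real (card J) * sig\<^sup>2)"
    for J :: "int set" and \<omega> :: 'a
  have "(\<integral>\<^sup>+\<omega>. f1 (g \<omega>) \<omega> \<partial>M) = (\<integral>\<^sup>+\<omega>. f2 (g \<omega>) \<omega> \<partial>M)"
  proof (rule nn_integral_cong_countable_partition[OF sigma_finite_measure_axioms countable_Collect_finite])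
    show "g \<in> measurable M (count_space {J. finite J})"
      unfolding g_def by (rule pts_index_T_measurable) simp
    show "f1 J \<in> borel_measurable M" "f2 J \<in> borel_measurable M" for J
      unfolding f1_def f2_def by measurable
    fix J :: "int set" assume "J \<in> {J. finite J}"
    then have J: "finite J" by simp
    define G where "G = {\<omega> \<in> space M. pts_index {a<..b} (T \<omega>) = J}"
    define d where "d = mu * real (card J) - c"
    define \<psi> where "\<psi> x = (d + (\<Sum>k\<in>J. x k))\<^sup>2" for x :: "int \<Rightarrow> real"
    have \<psi>m: "\<psi> \<in> borel_measurable seq_space" unfolding \<psi>_def by measurable
    have \<psi>i: "integrable M (\<lambda>\<omega>. \<psi> (\<lambda>k. e k \<omega>))"
      unfolding \<psi>_def by (rule shifted_sum_shocks_second_moment(1)[OF J])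
    note indep = integral_shocks_times_index_event[of "{a<..b}" J \<psi>, OF _ J \<psi>m \<psi>i, folded G_def]
    have Gm: "G \<in> sets M"
      using measurable_sets[OF pts_index_T_measurable[of "{a<..b}"], of "{J}"] J
      by (simp add: G_def vimage_def Int_def conj_commute)
    have "(\<integral>\<^sup>+\<omega>. f1 J \<omega> * indicator {\<omega> \<in> space M. g \<omega> = J} \<omega> \<partial>M)
        = (\<integral>\<^sup>+\<omega>. ennreal (\<psi> (\<lambda>k. e k \<omega>) * indicator G \<omega>) \<partial>M)"
      by (intro nn_integral_cong) (auto simp: f1_def \<psi>_def d_def G_def g_def indicator_def algebra_simps)
    also have "\<dots> = ennreal (prob G * (d\<^sup>2 + real (card J) * sig\<^sup>2))"
      using nn_integral_eq_integral[OF indep(1)] indep(2) shifted_sum_shocks_second_moment(2)[OF J, of d]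
      by (simp add: \<psi>_def indicator_def)
    also have "\<dots> = ennreal (d\<^sup>2 + real (card J) * sig\<^sup>2) * emeasure M G"
      by (simp add: emeasure_eq_measure ennreal_mult'' mult.commute)
    also have "\<dots> = (\<integral>\<^sup>+\<omega>. ennreal (d\<^sup>2 + real (card J) * sig\<^sup>2) * indicator G \<omega> \<partial>M)"
      by (rule nn_integral_cmult_indicator[symmetric, OF Gm])
    also have "\<dots> = (\<integral>\<^sup>+\<omega>. f2 J \<omega> * indicator {\<omega> \<in> space M. g \<omega> = J} \<omega> \<partial>M)"
      by (intro nn_integral_cong) (auto simp: f2_def d_def G_def g_def indicator_def)
    finally show "(\<integral>\<^sup>+\<omega>. f1 J \<omega> * indicator {\<omega> \<in> space M. g \<omega> = J} \<omega> \<partial>M)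
        = (\<integral>\<^sup>+\<omega>. f2 J \<omega> * indicator {\<omega> \<in> space M. g \<omega> = J} \<omega> \<partial>M)" .
  qed
  then show ?thesis
    by (simp add: f1_def f2_def g_def window_return_def count_pts_eq_card_pts_index sum_pts_index)
qed

lemma window_return_measurable [measurable]: "window_return mu a b \<in> borel_measurable M"
proof -
  have gm: "(\<lambda>\<omega>. pts_index {a<..b} (T \<omega>)) \<in> measurable M (count_space {J. finite J})"
    by (rule pts_index_T_measurable) simp
  have "(\<lambda>\<omega>. (\<lambda>J \<omega>. \<Sum>k\<in>J. e k \<omega>) (pts_index {a<..b} (T \<omega>)) \<omega>) \<in> borel_measurable M"
    by (rule measurable_compose_countable'[OF _ gm countable_Collect_finite]) measurable
  then have [measurable]: "(\<lambda>\<omega>. \<Sum>k\<in>{k. T \<omega> k \<in> {a<..b}}. e k \<omega>) \<in> borel_measurable M"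
    by (simp add: sum_pts_index)
  show ?thesis unfolding window_return_def[abs_def] by measurable
qed

lemma window_return_shifted_second_moment:
  assumes ab: "a \<le> b" and m: "0 \<le> m"
    and first: "\<And>s. (\<integral>\<^sup>+\<omega>. ennreal (Y \<omega> s) \<partial>M) = ennreal m"
    and second: "\<And>s u. (\<integral>\<^sup>+\<omega>. ennreal (Y \<omega> s * Y \<omega> u) \<partial>M) = ennreal (k (s - u))"
    and kc: "continuous_on UNIV k" and kpos: "\<And>x. 0 \<le> k x"
  shows "integrable M (\<lambda>\<omega>. (window_return mu a b \<omega> - c)\<^sup>2)"
    and "expectation (\<lambda>\<omega>. (window_return mu a b \<omega> - c)\<^sup>2)
      = mu\<^sup>2 * (m * (b - a) + (LBINT s=a..b. (LBINT u=a..b. k (s - u))))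
        - 2 * c * mu * (m * (b - a)) + c\<^sup>2 + sig\<^sup>2 * (m * (b - a))"
proof -
  define N where "N \<omega> = real (count_pts T \<omega> {a<..b})" for \<omega>
  define m1 where "m1 = m * (b - a)"
  define m2 where "m2 = m * (b - a) + (LBINT s=a..b. (LBINT u=a..b. k (s - u)))"
  define V where "V = mu\<^sup>2 * m2 - 2 * c * mu * m1 + c\<^sup>2 + sig\<^sup>2 * m1"
  have Nm[measurable]: "N \<in> borel_measurable M" unfolding N_def by measurable
  note double_interval_integral_nonneg[where k = k, OF ab kpos]
  then have m_pos: "0 \<le> m1" "0 \<le> m2" using ab m by (simp_all add: m1_def m2_def)
  have N1: "integrable M N \<and> expectation N = m1"
    using nn_integral_count_pts[OF ab first] m_pos
    by (subst nn_integral_eq_integrable[symmetric]) (simp_all add: N_def m1_def)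
  have N2: "integrable M (\<lambda>\<omega>. (N \<omega>)\<^sup>2) \<and> expectation (\<lambda>\<omega>. (N \<omega>)\<^sup>2) = m2"
    using nn_integral_count_pts_square[OF ab m first second kc kpos] m_pos
    by (subst nn_integral_eq_integrable[symmetric]) (simp_all add: N_def m2_def)
  have expand: "(mu * N \<omega> - c)\<^sup>2 + N \<omega> * sig\<^sup>2 = mu\<^sup>2 * (N \<omega>)\<^sup>2 - 2 * c * mu * N \<omega> + c\<^sup>2 + sig\<^sup>2 * N \<omega>" for \<omega>
    by (simp add: power2_eq_square algebra_simps)
  have IV: "integrable M (\<lambda>\<omega>. (mu * N \<omega> - c)\<^sup>2 + N \<omega> * sig\<^sup>2)"
    and EV: "expectation (\<lambda>\<omega>. (mu * N \<omega> - c)\<^sup>2 + N \<omega> * sig\<^sup>2) = V"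
    unfolding expand using N1 N2 by (simp_all add: V_def prob_space)
  have V_nonneg: "0 \<le> V"
    unfolding EV[symmetric] by (intro integral_nonneg_AE) (simp add: N_def)
  have "(\<integral>\<^sup>+\<omega>. ennreal ((mu * N \<omega> - c)\<^sup>2 + N \<omega> * sig\<^sup>2) \<partial>M) = ennreal V"
    using IV EV V_nonneg by (subst nn_integral_eq_integrable) (auto simp: N_def)
  then have "(\<integral>\<^sup>+\<omega>. ennreal ((window_return mu a b \<omega> - c)\<^sup>2) \<partial>M) = ennreal V"
    by (simp add: nn_integral_window_return_square N_def)
  then have "integrable M (\<lambda>\<omega>. (window_return mu a b \<omega> - c)\<^sup>2)
      \<and> expectation (\<lambda>\<omega>. (window_return mu a b \<omega> - c)\<^sup>2) = V"
    using V_nonneg by (subst nn_integral_eq_integrable[symmetric]) auto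
  then show "integrable M (\<lambda>\<omega>. (window_return mu a b \<omega> - c)\<^sup>2)"
    and "expectation (\<lambda>\<omega>. (window_return mu a b \<omega> - c)\<^sup>2)
      = mu\<^sup>2 * (m * (b - a) + (LBINT s=a..b. (LBINT u=a..b. k (s - u))))
        - 2 * c * mu * (m * (b - a)) + c\<^sup>2 + sig\<^sup>2 * (m * (b - a))"
    by (simp_all add: V_def m1_def m2_def)
qed

lemma variance_window_return:
  assumes ab: "a \<le> b" and m: "0 \<le> m"
    and first: "\<And>s. (\<integral>\<^sup>+\<omega>. ennreal (Y \<omega> s) \<partial>M) = ennreal m"
    and second: "\<And>s u. (\<integral>\<^sup>+\<omega>. ennreal (Y \<omega> s * Y \<omega> u) \<partial>M) = ennreal (k (s - u))"
    and kc: "continuous_on UNIV k" and kpos: "\<And>x. 0 \<le> k x"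
  shows "variance (window_return mu a b)
    = mu\<^sup>2 * ((LBINT s=a..b. (LBINT u=a..b. k (s - u))) - (m * (b - a))\<^sup>2) + m * (b - a) * (mu\<^sup>2 + sig\<^sup>2)"
proof -
  let ?r = "window_return mu a b"
  define m1 where "m1 = m * (b - a)"
  define Q where "Q = (LBINT s=a..b. (LBINT u=a..b. k (s - u)))"
  note moment = window_return_shifted_second_moment[OF assms, where mu = mu, folded m1_def Q_def]
  have I2: "integrable M (\<lambda>\<omega>. (?r \<omega>)\<^sup>2)" and E2: "expectation (\<lambda>\<omega>. (?r \<omega>)\<^sup>2) = mu\<^sup>2 * (m1 + Q) + sig\<^sup>2 * m1"
    using moment[where c = 0] by simp_all
  have I1: "integrable M ?r"
    by (rule square_integrable_imp_integrable[OF _ I2]) measurable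
  txt \<open>The mean is read off from the second moments of r and r - 1, so it needs no
    separate conditioning argument.\<close>
  have "expectation (\<lambda>\<omega>. (?r \<omega> - 1)\<^sup>2) = expectation (\<lambda>\<omega>. (?r \<omega>)\<^sup>2) - 2 * expectation ?r + 1"
  proof -
    have "(\<lambda>\<omega>. (?r \<omega> - 1)\<^sup>2) = (\<lambda>\<omega>. (?r \<omega>)\<^sup>2 - 2 * ?r \<omega> + 1)"
      by (simp add: fun_eq_iff power2_eq_square algebra_simps)
    then show ?thesis using I1 I2 by (simp add: prob_space)
  qed
  then have E1: "expectation ?r = mu * m1"
    using moment(2)[where c = 1] E2 by (simp add: algebra_simps)
  show ?thesis
    using variance_eq[OF I1 I2] E1 E2 unfolding m1_def[symmetric] Q_def[symmetric]
    by (simp add: power2_eq_square algebra_simps)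
qed

end

theorem mainTheorem2:
  fixes M :: "'a measure"
    and d H c lam mu sig :: real
    and B Z :: "'a \<Rightarrow> real \<Rightarrow> real"
    and T :: "'a \<Rightarrow> int \<Rightarrow> real"
    and e :: "int \<Rightarrow> 'a \<Rightarrow> real"
    and r :: "int \<Rightarrow> 'a \<Rightarrow> real"
  assumes "prob_space M"
    and "0 \<le> d" "d < 1/2" "H = 1/2 + d"
    and "c > 0" "lam > 0" "mu > 0"
    and fbm: "is_fbm M H B"
    and Zdef: "\<And>\<omega> t. Z \<omega> t = B \<omega> (c*t) - B \<omega> (c*t - 1)"
    and Tmeas: "\<And>k. (\<lambda>\<omega>. T \<omega> k) \<in> borel_measurable M"
    and Tmono: "\<And>\<omega>. \<omega> \<in> space M \<Longrightarrow> strict_mono (T \<omega>)"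
    and T0: "\<And>\<omega>. \<omega> \<in> space M \<Longrightarrow> T \<omega> 0 \<le> 0 \<and> 0 < T \<omega> 1"
    and cox: "cox_given M (vimage_algebra (space M) Z (Pi\<^sub>M UNIV (\<lambda>_. borel)))
               (\<lambda>\<omega> a b. LBINT s=a..b. lam * exp (Z \<omega> s)) T"
    and e_indep: "prob_space.indep_vars M (\<lambda>_. borel) e UNIV"
    and e_ident: "\<And>k. distr M borel (e k) = distr M borel (e 0)"
    and e_moments: "\<And>n::nat. integrable M (\<lambda>\<omega>. e 0 \<omega> ^ n)"
    and e_mean: "prob_space.expectation M (e 0) = 0"
    and e_var: "prob_space.variance M (e 0) = sig\<^sup>2"
    and e_N_indep: "prob_space.indep_var M (Pi\<^sub>M UNIV (\<lambda>_. borel)) (\<lambda>\<omega> k. e k \<omega>)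
                      (Pi\<^sub>M UNIV (\<lambda>_. borel)) (\<lambda>\<omega> k. T \<omega> k)"
    and rdef: "\<And>t \<omega>. r t \<omega> = mu * real (count_pts T \<omega> {real_of_int t - 1<..real_of_int t})
                   + (\<Sum>k\<in>{k. T \<omega> k \<in> {real_of_int t - 1<..real_of_int t}}. e k \<omega>)"
  shows "prob_space.variance M (r t) =
           mu\<^sup>2 * lam\<^sup>2 * exp 1 *
             (LBINT s=-1..0. (LBINT u=-1..0. exp (gammaZ H c (s - u)) - 1))
           + lam * exp (1/2) * (mu\<^sup>2 + sig\<^sup>2)"
proof -
  interpret prob_space M by fact
  have "H > 0" using \<open>0 \<le> d\<close> \<open>H = 1/2 + d\<close> by simp
  have lam: "0 \<le> lam" using \<open>lam > 0\<close> by simp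
  note Zm = fbm_increment_measurable[OF fbm Zdef]
  note moments = lognormal_intensity_moments[OF fbm Zdef \<open>prob_space M\<close> lam]
  interpret marked_cox M "vimage_algebra (space M) Z (Pi\<^sub>M UNIV (\<lambda>_. borel))"
      "\<lambda>\<omega> s. lam * exp (Z \<omega> s)" T e sig
    using subalgebra_vimage_algebra_coordinates[OF Zm] Zm fbm_increment_continuous[OF fbm Zdef]
      lam Tmeas cox e_indep e_ident e_moments[of 2] e_mean e_var e_N_indep
    by unfold_locales (auto intro!: continuous_intros)
  have kc: "continuous_on UNIV (\<lambda>r. exp (gammaZ H c r))"
    using continuous_on_gammaZ[OF \<open>H > 0\<close>] by (intro continuous_intros)
  have "r t = window_return mu (real_of_int t - 1) (real_of_int t)"
    by (simp add: fun_eq_iff rdef window_return_def)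
  moreover have "(lam * exp (1/2))\<^sup>2 = lam\<^sup>2 * exp 1"
    by (simp add: power_mult_distrib power2_eq_square exp_add[symmetric])
  ultimately show ?thesis
    using variance_window_return[where a = "real_of_int t - 1" and b = "real_of_int t"
        and k = "\<lambda>r. lam\<^sup>2 * exp 1 * exp (gammaZ H c r)", OF _ _ moments]
      double_interval_integral_unit_window[OF kc, of "real_of_int t - 1" "lam\<^sup>2 * exp 1"] kc lam
    by (simp add: continuous_on_mult_left)
qed

end
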